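(* Let $X$ be a real Banach space ordered by a generating and normal cone $K$. Let $A$ be a bounded linear operator on $X$ with $A(K)\subseteq K$, and suppose $A=T+F$, where $T,F$ are bounded linear operators on $X$ with $T(K)\subseteq K$, $F(K)\subseteq K$, and $r(T)<1$. Define $R_0:=r\big(F(I-T)^{-1}\big)$. Then exactly one of the following holds: (a) $R_0\ge r(A)>1$; (b) $R_0=r(A)=1$; (c) $R_0\le r(A)<1$.
   Context: A cone $K\subseteq X$ is a closed convex set such that $\alpha x\in K$ whenever $x\in K,\ \alpha\ge 0$, and such that $x\in K$, $-x\in K$ imply $x=0$. $K$ is generating if $X=K-K$, and normal if there is $\gamma>0$ such that $0\le x\le y$ implies $\|x\|\le\gamma\|y\|$, where $x\le y$ means $y-x\in K$. For a bounded operator $B$ on a real Banach space, the spectrum $\sigma(B)$ and spectral radius $r(B)=\sup\{|\lambda|:\lambda\in\sigma(B)\}$ are those of its complexification on $X+iX$. *)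

theory Defs
  imports "HOL-Analysis.Analysis"
begin

definition is_cone :: "'a::real_normed_vector set \<Rightarrow> bool" where
  "is_cone K \<longleftrightarrow> closed K \<and> convex K \<and> (\<forall>x\<in>K. \<forall>\<alpha>::real. \<alpha> \<ge> 0 \<longrightarrow> \<alpha> *\<^sub>R x \<in> K)
     \<and> (\<forall>x. x \<in> K \<and> - x \<in> K \<longrightarrow> x = 0)"

definition generating_cone :: "'a::real_normed_vector set \<Rightarrow> bool" where
  "generating_cone K \<longleftrightarrow> {x - y | x y. x \<in> K \<and> y \<in> K} = UNIV"

definition normal_cone :: "'a::real_normed_vector set \<Rightarrow> bool" where
  "normal_cone K \<longleftrightarrow> (\<exists>\<gamma>>0. \<forall>x y. x \<in> K \<and> y - x \<in> K \<longrightarrow> norm x \<le> \<gamma> * norm y)"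

text \<open>Complexification X + iX is modelled as X \<times> X, (x,y) standing for x + i y.
  For z = a + i b, (B - \<lambda> I)(x + i y) = (B x - a x + b y) + i (B y - b x - a y).\<close>
definition cplx_shift :: "('a::real_normed_vector \<Rightarrow> 'a) \<Rightarrow> complex \<Rightarrow> ('a \<times> 'a \<Rightarrow> 'a \<times> 'a)" where
  "cplx_shift B z = (\<lambda>(x, y). (B x - Re z *\<^sub>R x + Im z *\<^sub>R y, B y - Im z *\<^sub>R x - Re z *\<^sub>R y))"

definition op_spectrum :: "('a::real_normed_vector \<Rightarrow> 'a) \<Rightarrow> complex set" where
  "op_spectrum B = {z. \<not> (\<exists>S. bounded_linear S \<and> S \<circ> cplx_shift B z = id \<and> cplx_shift B z \<circ> S = id)}"

definition spectral_radius :: "('a::real_normed_vector \<Rightarrow> 'a) \<Rightarrow> real" where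
  "spectral_radius B = Sup (cmod ` op_spectrum B)"

end

theory Submission
  imports Defs
begin

(*
  For a positive operator B the spectral radius equals the growth rate of B on the cone,
  the infimum of the m > 0 with norm (B^n x) <= C m^n norm x for all x in K.  Ando's theorem
  (a generating cone admits decompositions x = u - v with norm u, norm v <= M norm x) extends
  such bounds from K to the whole space, so the Neumann series confines the spectrum to the
  disc of that radius; normality shows that l - B has a positive inverse exactly for l above
  the growth rate, and a limit argument puts the growth rate itself into the spectrum.

  Writing R_l for the inverse of l - T, the factorisation l - T - F = (1 - F R_l)(l - T) shows
  that r(A) < l iff r(F R_l) < 1, and the resolvent identity compares F R_l with F R_1 / l;
  this settles the cases r(A) < 1 and r(A) > 1.  For r(A) = 1, log-convexity of
  s -> r(T + s F), obtained by interpolating the expansions of (T + s F)^n with Young's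
  inequality, gives r(T + s F) < 1 for s < 1, hence r(s F R_1) < 1 for all s < 1 and R_0 <= 1,
  while R_0 < 1 would force r(A) < 1.
*)


section \<open>Operators on Banach spaces\<close>

lemma bounded_linear_funpow:
  fixes B :: "'a::real_normed_vector \<Rightarrow> 'a"
  assumes "bounded_linear B"
  shows "bounded_linear (B ^^ n)"
proof (induction n)
  case 0
  show ?case unfolding funpow_simps_right(1) id_def by (rule bounded_linear_ident)
next
  case (Suc n)
  then show ?case by (simp add: assms bounded_linear_compose)
qed

lemma funpow_norm_bound:
  fixes B :: "'a::real_normed_vector \<Rightarrow> 'a"
  assumes "bounded_linear B"
  obtains c where "c > 0" "\<And>x n. norm ((B ^^ n) x) \<le> c ^ n * norm x"
proof -
  obtain c where c: "c > 0" "\<And>x. norm (B x) \<le> norm x * c"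
    using bounded_linear.pos_bounded[OF assms] by blast
  have "norm ((B ^^ n) x) \<le> c ^ n * norm x" for x n
  proof (induction n)
    case 0
    then show ?case by simp
  next
    case (Suc n)
    have "norm ((B ^^ Suc n) x) \<le> norm ((B ^^ n) x) * c" using c(2) by simp
    also have "\<dots> \<le> c ^ n * norm x * c" using Suc c(1) by (intro mult_right_mono) auto
    finally show ?case by (simp add: algebra_simps)
  qed
  then show ?thesis using that c(1) by blast
qed

lemma funpow_telescope_sums:
  fixes E :: "'a::real_normed_vector \<Rightarrow> 'a"
  assumes "(\<lambda>n. (E ^^ n) v) \<longlonglongrightarrow> 0"
  shows "(\<lambda>n. (E ^^ n) v - (E ^^ Suc n) v) sums v"
proof -
  have "(\<lambda>n. (- (E ^^ Suc n) v) - (- (E ^^ n) v)) sums (0 - (- (E ^^ 0) v))"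
    by (rule telescope_sums) (use tendsto_minus[OF assms] in simp)
  then show ?thesis by simp
qed

lemma summable_funpow_geometric:
  fixes E :: "'a::banach \<Rightarrow> 'a"
  assumes q: "0 \<le> q" "q < 1" and bound: "\<And>n. norm ((E ^^ n) v) \<le> C * q ^ n * norm v"
  shows "summable (\<lambda>n. (E ^^ n) v)" and "norm (\<Sum>n. (E ^^ n) v) \<le> C / (1 - q) * norm v"
proof -
  have geometric: "summable (\<lambda>n. C * norm v * q ^ n)"
    using q by (intro summable_mult summable_geometric) auto
  show summable: "summable (\<lambda>n. (E ^^ n) v)"
    by (rule summable_comparison_test'[OF geometric, of 0]) (use bound in \<open>simp add: algebra_simps\<close>)
  have "norm (\<Sum>n. (E ^^ n) v) \<le> (\<Sum>n. C * norm v * q ^ n)"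
    by (rule norm_suminf_le[OF _ geometric]) (use bound in \<open>simp add: algebra_simps\<close>)
  also have "\<dots> = C / (1 - q) * norm v"
    using q by (simp add: suminf_mult suminf_geometric field_simps)
  finally show "norm (\<Sum>n. (E ^^ n) v) \<le> C / (1 - q) * norm v" .
qed

lemma neumann_series:
  fixes E :: "'a::banach \<Rightarrow> 'a"
  assumes E: "bounded_linear E" and q: "0 \<le> q" "q < 1"
    and bound: "\<And>v n. norm ((E ^^ n) v) \<le> C * q ^ n * norm v"
  defines "S \<equiv> \<lambda>v. \<Sum>n. (E ^^ n) v"
  shows "\<And>v. summable (\<lambda>n. (E ^^ n) v)" and "bounded_linear S"
    and "\<And>v. S (v - E v) = v" and "\<And>v. S v - E (S v) = v"
    and "\<And>v. norm (S v) \<le> C / (1 - q) * norm v"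
proof -
  show summable: "summable (\<lambda>n. (E ^^ n) v)" for v
    using summable_funpow_geometric(1)[OF q bound] .
  show norm_S: "norm (S v) \<le> C / (1 - q) * norm v" for v
    unfolding S_def using summable_funpow_geometric(2)[OF q bound] .
  have lin: "linear (E ^^ n)" for n
    using bounded_linear_funpow[OF E] bounded_linear.linear by blast
  show "bounded_linear S"
  proof (rule bounded_linear_intro[where K="C / (1 - q)"])
    show "S (x + y) = S x + S y" for x y unfolding S_def
      using suminf_add[OF summable[of x] summable[of y]] linear_add[OF lin] by simp
    show "S (r *\<^sub>R x) = r *\<^sub>R S x" for r x unfolding S_def
      using suminf_scaleR_right[OF summable[of x], of r] linear_scale[OF lin] by simp
    show "norm (S x) \<le> norm x * (C / (1 - q))" for x
      using norm_S[of x] by (simp add: mult.commute)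
  qed
  have telescope: "(\<lambda>n. (E ^^ n) v - (E ^^ Suc n) v) sums v" for v
    by (rule funpow_telescope_sums[OF summable_LIMSEQ_zero[OF summable]])
  show "S (v - E v) = v" for v
  proof -
    have "(E ^^ n) (v - E v) = (E ^^ n) v - (E ^^ Suc n) v" for n
      using linear_diff[OF lin] by (simp add: funpow_swap1)
    then have "(\<lambda>n. (E ^^ n) (v - E v)) sums v" using telescope[of v] by simp
    then show ?thesis unfolding S_def by (rule sums_unique[symmetric])
  qed
  show "S v - E (S v) = v" for v
  proof -
    have shifted: "summable (\<lambda>n. (E ^^ Suc n) v)"
      using summable[of "E v"] by (simp add: funpow_swap1)
    have "E (S v) = (\<Sum>n. (E ^^ Suc n) v)" unfolding S_def
      using bounded_linear.suminf[OF E summable] by simp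
    then have "S v - E (S v) = (\<Sum>n. (E ^^ n) v - (E ^^ Suc n) v)"
      unfolding S_def using suminf_diff[OF summable[of v] shifted] by simp
    also have "\<dots> = v" using sums_unique[OF telescope[of v]] by simp
    finally show ?thesis .
  qed
qed

definition real_resolvent :: "('a::real_normed_vector \<Rightarrow> 'a) \<Rightarrow> real \<Rightarrow> ('a \<Rightarrow> 'a) \<Rightarrow> bool" where
  "real_resolvent B l R \<longleftrightarrow>
     bounded_linear R \<and> (\<forall>x. R (l *\<^sub>R x - B x) = x) \<and> (\<forall>x. l *\<^sub>R R x - B (R x) = x)"

lemma real_resolventD:
  assumes "real_resolvent B l R"
  shows "bounded_linear R" "R (l *\<^sub>R x - B x) = x" "l *\<^sub>R R x - B (R x) = x"
  using assms by (auto simp: real_resolvent_def)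

lemma real_resolvent_shift:
  "real_resolvent (\<lambda>x. B x + c *\<^sub>R x) l R \<longleftrightarrow> real_resolvent B (l - c) R"
  unfolding real_resolvent_def by (simp add: algebra_simps)

lemma real_resolvent_unique:
  assumes "real_resolvent B l R" "real_resolvent B l R'"
  shows "R = R'"
proof
  fix x
  show "R x = R' x"
    using real_resolventD(2)[OF assms(1), of "R' x"] real_resolventD(3)[OF assms(2), of x] by simp
qed

lemma inv_eq_real_resolvent_one:
  assumes "real_resolvent B 1 R"
  shows "inv (\<lambda>x. x - B x) = R"
  using real_resolventD(2,3)[OF assms] by (intro inv_unique_comp) (auto simp: fun_eq_iff)

lemma real_resolvent_add:
  fixes B E R S :: "'a::real_normed_vector \<Rightarrow> 'a"
  assumes B: "linear B" and R: "real_resolvent B l R" and S: "bounded_linear S"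
    and left: "\<And>v. S (v - R (E v)) = v" and right: "\<And>v. S v - R (E (S v)) = v"
  shows "real_resolvent (\<lambda>x. B x + E x) l (\<lambda>x. S (R x))"
  unfolding real_resolvent_def
proof (intro conjI allI)
  note RD = real_resolventD[OF R]
  show "bounded_linear (\<lambda>x. S (R x))" using bounded_linear_compose[OF S RD(1)] by (simp add: o_def)
  show "S (R (l *\<^sub>R x - (B x + E x))) = x" for x
  proof -
    have "R (l *\<^sub>R x - (B x + E x)) = x - R (E x)"
      using linear_diff[OF bounded_linear.linear[OF RD(1)], of "l *\<^sub>R x - B x" "E x"] RD(2)
      by (simp add: algebra_simps)
    then show ?thesis using left by simp
  qed
  show "l *\<^sub>R S (R x) - (B (S (R x)) + E (S (R x))) = x" for x
  proof -
    define y where "y = S (R x)"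
    have "y - R (E y) = R x" using right by (simp add: y_def)
    have "l *\<^sub>R y - B y = (l *\<^sub>R (y - R (E y)) - B (y - R (E y))) + (l *\<^sub>R R (E y) - B (R (E y)))"
      using linear_diff[OF B, of y "R (E y)"] by (simp add: scaleR_diff_right)
    also have "\<dots> = x + E y" using \<open>y - R (E y) = R x\<close> RD(3) by simp
    finally show ?thesis unfolding y_def[symmetric] by (simp add: algebra_simps)
  qed
qed

lemma real_resolvent_perturbation:
  fixes B E R :: "'a::banach \<Rightarrow> 'a"
  assumes B: "linear B" and R: "real_resolvent B l R" and E: "bounded_linear E"
    and q: "0 \<le> q" "q \<le> 1/2" and small: "\<And>x. norm (R (E x)) \<le> q * norm x"
  defines "R' \<equiv> \<lambda>x. \<Sum>n. ((\<lambda>y. R (E y)) ^^ n) (R x)"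
  shows "real_resolvent (\<lambda>x. B x + E x) l R'"
    and "\<And>x. norm (R' x - R x) \<le> 2 * q * norm (R x)"
    and "\<And>x. summable (\<lambda>n. ((\<lambda>y. R (E y)) ^^ n) (R x))"
proof -
  define P where "P = (\<lambda>y. R (E y))"
  have P: "bounded_linear P"
    unfolding P_def using bounded_linear_compose[OF real_resolventD(1)[OF R] E] by (simp add: o_def)
  have P_power: "norm ((P ^^ n) v) \<le> 1 * q ^ n * norm v" for v n
  proof (induction n)
    case (Suc n)
    have "norm ((P ^^ Suc n) v) \<le> q * norm ((P ^^ n) v)" using small by (simp add: P_def)
    also have "\<dots> \<le> q * (1 * q ^ n * norm v)" using Suc q by (intro mult_left_mono) auto
    finally show ?case by simp
  qed simp
  define S where "S = (\<lambda>v. \<Sum>n. (P ^^ n) v)"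
  have "q < 1" using q by simp
  have N: "\<And>v. summable (\<lambda>n. (P ^^ n) v)" "bounded_linear S" "\<And>v. S (v - P v) = v"
    "\<And>v. S v - P (S v) = v" "\<And>v. norm (S v) \<le> 1 / (1 - q) * norm v"
    using neumann_series[OF P q(1) \<open>q < 1\<close> P_power] unfolding S_def by simp_all
  have R'_eq: "R' = (\<lambda>x. S (R x))" unfolding R'_def S_def P_def ..
  show "summable (\<lambda>n. ((\<lambda>y. R (E y)) ^^ n) (R x))" for x using N(1) by (simp add: P_def)
  show "real_resolvent (\<lambda>x. B x + E x) l R'"
    unfolding R'_eq using real_resolvent_add[OF B R N(2)] N(3,4) by (simp add: P_def)
  show "norm (R' x - R x) \<le> 2 * q * norm (R x)" for x
  proof -
    have "R' x - R x = P (S (R x))" using N(4)[of "R x"] unfolding R'_eq by (simp add: algebra_simps)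
    then have "norm (R' x - R x) \<le> q * norm (S (R x))" using small by (simp add: P_def)
    also have "\<dots> \<le> q * (1 / (1 - q) * norm (R x))" using N(5)[of "R x"] q by (intro mult_left_mono) auto
    also have "\<dots> \<le> q * (2 * norm (R x))"
      using q by (intro mult_left_mono mult_right_mono) (auto simp: field_simps)
    finally show ?thesis by simp
  qed
qed

lemma real_resolvent_neumann:
  fixes B :: "'a::banach \<Rightarrow> 'a"
  assumes B: "bounded_linear B" and C: "\<And>x n. norm ((B ^^ n) x) \<le> C * m ^ n * norm x"
    and m: "0 < m" "m < l"
  defines "E \<equiv> \<lambda>x. (1/l) *\<^sub>R B x"
  shows "real_resolvent B l (\<lambda>x. (1/l) *\<^sub>R (\<Sum>n. (E ^^ n) x))"
    and "\<And>x. summable (\<lambda>n. (E ^^ n) x)"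
proof -
  have l: "l > 0" using m by simp
  have E: "bounded_linear E" unfolding E_def
    using bounded_linear_compose[OF bounded_linear_scaleR_right B] by (simp add: o_def)
  have E_power: "(E ^^ n) x = (1/l) ^ n *\<^sub>R (B ^^ n) x" for n x
    by (induction n) (simp_all add: E_def linear_scale[OF bounded_linear.linear[OF B]])
  have "norm ((E ^^ n) x) \<le> C * (m/l) ^ n * norm x" for n x
  proof -
    have "norm ((E ^^ n) x) = (1/l) ^ n * norm ((B ^^ n) x)" using l by (simp add: E_power)
    also have "\<dots> \<le> (1/l) ^ n * (C * m ^ n * norm x)" using C l by (intro mult_left_mono) auto
    also have "\<dots> = C * (m/l) ^ n * norm x" by (simp add: power_divide)
    finally show ?thesis .
  qed
  moreover have "0 \<le> m / l" "m / l < 1" using m by auto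
  ultimately have N: "\<And>v. summable (\<lambda>n. (E ^^ n) v)" "bounded_linear (\<lambda>v. \<Sum>n. (E ^^ n) v)"
    "\<And>v. (\<Sum>n. (E ^^ n) (v - E v)) = v" "\<And>v. (\<Sum>n. (E ^^ n) v) - E (\<Sum>n. (E ^^ n) v) = v"
    using neumann_series[OF E] by blast+
  show "summable (\<lambda>n. (E ^^ n) x)" for x by (rule N(1))
  show "real_resolvent B l (\<lambda>x. (1/l) *\<^sub>R (\<Sum>n. (E ^^ n) x))"
    unfolding real_resolvent_def
  proof (intro conjI allI)
    show "bounded_linear (\<lambda>x. (1/l) *\<^sub>R (\<Sum>n. (E ^^ n) x))"
      using bounded_linear_compose[OF bounded_linear_scaleR_right N(2)] by (simp add: o_def)
    show "(1/l) *\<^sub>R (\<Sum>n. (E ^^ n) (l *\<^sub>R x - B x)) = x" for x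
    proof -
      have "l *\<^sub>R x - B x = l *\<^sub>R (x - E x)" using l by (simp add: E_def algebra_simps)
      then show ?thesis
        using N(3) linear_scale[OF bounded_linear.linear[OF N(2)]] l by simp
    qed
    show "l *\<^sub>R ((1/l) *\<^sub>R (\<Sum>n. (E ^^ n) x)) - B ((1/l) *\<^sub>R (\<Sum>n. (E ^^ n) x)) = x" for x
      using N(4)[of x] l by (simp add: E_def linear_scale[OF bounded_linear.linear[OF B]])
  qed
qed

lemma resolvent_expansion:
  fixes B :: "'a::real_normed_vector \<Rightarrow> 'a"
  assumes B: "bounded_linear B" and y: "l *\<^sub>R y - B y = x" and l: "l \<noteq> 0"
  shows "y = (\<Sum>n<N. (1/l) ^ Suc n *\<^sub>R (B ^^ n) x) + (1/l) ^ N *\<^sub>R (B ^^ N) y"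
proof (induction N)
  case (Suc N)
  have lin: "linear (B ^^ N)" using bounded_linear_funpow[OF B] bounded_linear.linear by blast
  have "l *\<^sub>R y = x + B y" using y by (simp add: algebra_simps)
  then have y': "y = (1/l) *\<^sub>R (x + B y)" using l by (metis scaleR_scaleR nonzero_divide_eq_eq scaleR_one)
  have "(B ^^ N) ((1/l) *\<^sub>R (x + B y)) = (1/l) *\<^sub>R ((B ^^ N) x + (B ^^ Suc N) y)"
    by (simp add: linear_scale[OF lin] linear_add[OF lin] funpow_swap1)
  then have "(B ^^ N) y = (1/l) *\<^sub>R ((B ^^ N) x + (B ^^ Suc N) y)"
    by (simp only: y'[symmetric])
  then have "(1/l) ^ N *\<^sub>R (B ^^ N) y = (1/l) ^ N *\<^sub>R ((1/l) *\<^sub>R ((B ^^ N) x + (B ^^ Suc N) y))"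
    by (rule arg_cong)
  also have "\<dots> = (1/l) ^ Suc N *\<^sub>R (B ^^ N) x + (1/l) ^ Suc N *\<^sub>R (B ^^ Suc N) y"
    by (simp add: scaleR_add_right)
  finally have step: "(1/l) ^ N *\<^sub>R (B ^^ N) y
      = (1/l) ^ Suc N *\<^sub>R (B ^^ N) x + (1/l) ^ Suc N *\<^sub>R (B ^^ Suc N) y" .
  have "y = (\<Sum>n<N. (1/l) ^ Suc n *\<^sub>R (B ^^ n) x)
      + ((1/l) ^ Suc N *\<^sub>R (B ^^ N) x + (1/l) ^ Suc N *\<^sub>R (B ^^ Suc N) y)"
    by (rule Suc.IH[unfolded step])
  also have "\<dots> = (\<Sum>n<Suc N. (1/l) ^ Suc n *\<^sub>R (B ^^ n) x) + (1/l) ^ Suc N *\<^sub>R (B ^^ Suc N) y"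
    by (simp add: add.assoc)
  finally show ?case .
qed simp

lemma resolvent_difference:
  fixes T :: "'a::real_normed_vector \<Rightarrow> 'a"
  assumes T: "linear T" and Rl: "real_resolvent T l Rl" and R1: "real_resolvent T 1 R1" and l: "l \<noteq> 0"
  shows "Rl x - (1/l) *\<^sub>R R1 x = ((1 - l) / l) *\<^sub>R T (Rl (R1 x))"
proof -
  define y where "y = R1 x"
  define w where "w = Rl y"
  have y: "y - T y = x" using real_resolventD(3)[OF R1] by (simp add: y_def)
  have w: "l *\<^sub>R w - T w = y" using real_resolventD(3)[OF Rl] by (simp add: w_def)
  have "T y = l *\<^sub>R T w - T (T w)" using w[symmetric] linear_diff[OF T] linear_scale[OF T] by metis
  then have "Rl (T y) = T w" using real_resolventD(2)[OF Rl, of "T w"] by simp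
  then have "Rl x = w - T w"
    using y[symmetric] linear_diff[OF bounded_linear.linear[OF real_resolventD(1)[OF Rl]], of y "T y"]
    by (simp add: w_def)
  moreover have "(1/l) *\<^sub>R y = w - (1/l) *\<^sub>R T w"
    using w[symmetric] l by (simp add: scaleR_diff_right)
  ultimately have "Rl x - (1/l) *\<^sub>R y = (1/l - 1) *\<^sub>R T w" by (simp add: algebra_simps)
  moreover have "1/l - 1 = (1 - l) / l" using l by (simp add: field_simps)
  ultimately show ?thesis by (simp add: y_def w_def)
qed

(* with R the inverse of l - T, l - T - G factors as (1 - G R) (l - T) *)
lemma real_resolvent_next_generation:
  assumes R: "real_resolvent T l R" and S: "real_resolvent (\<lambda>x. T x + G x) l S"
    and G: "bounded_linear G"
  shows "real_resolvent (\<lambda>x. G (R x)) 1 (\<lambda>y. y + G (S y))"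
  unfolding real_resolvent_def
proof (intro conjI allI)
  note RD = real_resolventD[OF R] and SD = real_resolventD[OF S]
  show "bounded_linear (\<lambda>y. y + G (S y))"
    by (intro bounded_linear_add bounded_linear_ident bounded_linear_compose[OF G SD(1), unfolded o_def])
  show "1 *\<^sub>R y - G (R y) + G (S (1 *\<^sub>R y - G (R y))) = y" for y
  proof -
    have "l *\<^sub>R R y - (T (R y) + G (R y)) = y - G (R y)" using RD(3)[of y] by (simp add: algebra_simps)
    then have "S (y - G (R y)) = R y" using SD(2)[of "R y"] by metis
    then show ?thesis by simp
  qed
  show "1 *\<^sub>R (y + G (S y)) - G (R (y + G (S y))) = y" for y
  proof -
    have "l *\<^sub>R S y - T (S y) = y + G (S y)" using SD(3)[of y] by (simp add: algebra_simps)
    then have "R (y + G (S y)) = S y" using RD(2)[of "S y"] by metis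
    then show ?thesis by simp
  qed
qed

lemma real_resolvent_from_next_generation:
  assumes R: "real_resolvent T l R" and Q: "real_resolvent (\<lambda>x. G (R x)) 1 Q"
  shows "real_resolvent (\<lambda>x. T x + G x) l (\<lambda>y. R (Q y))"
  unfolding real_resolvent_def
proof (intro conjI allI)
  note RD = real_resolventD[OF R] and QD = real_resolventD[OF Q]
  show "bounded_linear (\<lambda>y. R (Q y))"
    using bounded_linear_compose[OF RD(1) QD(1)] by (simp add: o_def)
  show "R (Q (l *\<^sub>R x - (T x + G x))) = x" for x
  proof -
    have "Q (l *\<^sub>R x - (T x + G x)) = l *\<^sub>R x - T x"
      using QD(2)[of "l *\<^sub>R x - T x"] RD(2)[of x] by (simp add: algebra_simps)
    then show ?thesis using RD(2) by simp
  qed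
  show "l *\<^sub>R R (Q y) - (T (R (Q y)) + G (R (Q y))) = y" for y
    using RD(3)[of "Q y"] QD(3)[of y] by (simp add: algebra_simps)
qed

section \<open>Complexification\<close>

definition cplx_scale :: "complex \<Rightarrow> 'a::real_normed_vector \<times> 'a \<Rightarrow> 'a \<times> 'a" where
  "cplx_scale w = (\<lambda>(x, y). (Re w *\<^sub>R x - Im w *\<^sub>R y, Im w *\<^sub>R x + Re w *\<^sub>R y))"

definition cplx_map :: "('a \<Rightarrow> 'a) \<Rightarrow> 'a \<times> 'a \<Rightarrow> 'a \<times> 'a" where
  "cplx_map B = (\<lambda>(x, y). (B x, B y))"

lemma cplx_shift_eq: "cplx_shift B z v = cplx_map B v - cplx_scale z v"
  by (cases v) (simp add: cplx_shift_def cplx_map_def cplx_scale_def algebra_simps)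

lemma cplx_scale_mult: "cplx_scale a (cplx_scale b v) = cplx_scale (a * b) v"
  by (cases v) (simp add: cplx_scale_def algebra_simps)

lemma cplx_scale_one [simp]: "cplx_scale 1 v = v"
  by (cases v) (simp add: cplx_scale_def)

lemma cplx_scale_minus: "cplx_scale (- a) v = - cplx_scale a v"
  by (cases v) (simp add: cplx_scale_def algebra_simps)

lemma cplx_scale_cplx_map: "linear B \<Longrightarrow> cplx_scale w (cplx_map B v) = cplx_map B (cplx_scale w v)"
  by (cases v) (simp add: cplx_scale_def cplx_map_def linear_diff linear_add linear_scale)

lemma bounded_linear_cplx_scale: "bounded_linear (cplx_scale w :: 'a::real_normed_vector \<times> 'a \<Rightarrow> _)"
proof -
  have eq: "cplx_scale w = (\<lambda>v. (Re w *\<^sub>R fst v - Im w *\<^sub>R snd v, Im w *\<^sub>R fst v + Re w *\<^sub>R snd v))"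
    by (auto simp: cplx_scale_def)
  show ?thesis unfolding eq
    by (intro bounded_linear_Pair bounded_linear_sub bounded_linear_add bounded_linear_fst
        bounded_linear_snd bounded_linear_compose[OF bounded_linear_scaleR_right, unfolded o_def])
qed

lemma cplx_scale_diff: "cplx_scale w (a - b) = cplx_scale w a - cplx_scale w b"
  using linear_diff[OF bounded_linear.linear[OF bounded_linear_cplx_scale]] .

lemma cplx_scale_uminus: "cplx_scale w (- a) = - cplx_scale w a"
  using linear_neg[OF bounded_linear.linear[OF bounded_linear_cplx_scale]] .

lemma bounded_linear_cplx_map: "bounded_linear B \<Longrightarrow> bounded_linear (cplx_map B)"
proof -
  assume B: "bounded_linear B"
  have eq: "cplx_map B = (\<lambda>v. (B (fst v), B (snd v)))" by (auto simp: cplx_map_def)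
  show ?thesis unfolding eq
    by (intro bounded_linear_Pair bounded_linear_compose[OF B, unfolded o_def]
        bounded_linear_fst bounded_linear_snd)
qed

lemma norm_cplx_scale_le: "norm (cplx_scale w v) \<le> 2 * cmod w * norm v"
proof (cases v)
  case (Pair x y)
  have pair: "norm (a *\<^sub>R u, b *\<^sub>R u) = sqrt (a\<^sup>2 + b\<^sup>2) * norm u" for a b and u :: 'a
  proof -
    have "norm (a *\<^sub>R u, b *\<^sub>R u) = sqrt ((a\<^sup>2 + b\<^sup>2) * (norm u)\<^sup>2)"
      by (simp add: norm_Pair power_mult_distrib algebra_simps)
    then show ?thesis by (simp add: real_sqrt_mult)
  qed
  have "cplx_scale w v = (Re w *\<^sub>R x, Im w *\<^sub>R x) + (- Im w *\<^sub>R y, Re w *\<^sub>R y)"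
    by (simp add: Pair cplx_scale_def)
  then have "norm (cplx_scale w v) \<le> norm (Re w *\<^sub>R x, Im w *\<^sub>R x) + norm (- Im w *\<^sub>R y, Re w *\<^sub>R y)"
    by (metis norm_triangle_ineq)
  also have "\<dots> = cmod w * norm x + cmod w * norm y" unfolding pair by (simp add: cmod_def)
  also have "\<dots> \<le> cmod w * norm v + cmod w * norm v"
    using norm_fst_le[of x y] norm_snd_le[of y x] Pair by (intro add_mono mult_left_mono) auto
  finally show ?thesis by simp
qed

lemma norm_cplx_map_le:
  assumes "0 \<le> c" "\<And>x. norm (A x) \<le> c * norm x"
  shows "norm (cplx_map A v) \<le> 2 * c * norm v"
proof (cases v)
  case (Pair x y)
  have "norm (cplx_map A v) \<le> norm (A x) + norm (A y)" by (simp add: Pair cplx_map_def norm_Pair_le)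
  also have "\<dots> \<le> c * norm v + c * norm v"
    using assms mult_left_mono[OF norm_fst_le[of x y]] mult_left_mono[OF norm_snd_le[of y x]] Pair
    by (smt (verit))
  finally show ?thesis by simp
qed

lemma not_in_op_spectrum_iff:
  "z \<notin> op_spectrum B \<longleftrightarrow>
    (\<exists>S. bounded_linear S \<and> (\<forall>v. S (cplx_shift B z v) = v) \<and> (\<forall>v. cplx_shift B z (S v) = v))"
  unfolding op_spectrum_def by (auto simp: fun_eq_iff)

lemma op_spectrum_trivial:
  assumes "\<And>x::'a::real_normed_vector. x = 0"
  shows "op_spectrum (B :: 'a \<Rightarrow> 'a) = {}"
proof -
  have "v = 0" for v :: "'a \<times> 'a" using assms[of "fst v"] assms[of "snd v"] by (simp add: prod_eq_iff)
  then have "z \<notin> op_spectrum B" for z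
    unfolding not_in_op_spectrum_iff by (metis bounded_linear_ident)
  then show ?thesis by blast
qed

lemma real_resolvent_if_not_in_op_spectrum:
  fixes B :: "'a::real_normed_vector \<Rightarrow> 'a"
  assumes B: "bounded_linear B" and "complex_of_real l \<notin> op_spectrum B"
  obtains R where "real_resolvent B l R"
proof -
  obtain S where S: "bounded_linear S" "\<And>v. S (cplx_shift B (complex_of_real l) v) = v"
    "\<And>v. cplx_shift B (complex_of_real l) (S v) = v"
    using assms(2) not_in_op_spectrum_iff by blast
  have shift: "cplx_shift B (complex_of_real l) (x, y) = (B x - l *\<^sub>R x, B y - l *\<^sub>R y)" for x y
    by (simp add: cplx_shift_def)
  have B0: "B 0 = 0" using linear_0[OF bounded_linear.linear[OF B]] .
  define R where "R = (\<lambda>x. - fst (S (x, 0)))"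
  have "real_resolvent B l R"
    unfolding real_resolvent_def
  proof (intro conjI allI)
    show "bounded_linear R" unfolding R_def
      by (intro bounded_linear_minus bounded_linear_compose[OF bounded_linear_fst, unfolded o_def]
          bounded_linear_compose[OF S(1), unfolded o_def] bounded_linear_Pair bounded_linear_ident
          bounded_linear_zero)
    show "R (l *\<^sub>R x - B x) = x" for x
    proof -
      have "(l *\<^sub>R x - B x, 0) = - cplx_shift B (complex_of_real l) (x, 0)" by (simp add: shift B0)
      then show ?thesis
        using S(2) linear_neg[OF bounded_linear.linear[OF S(1)]] by (simp add: R_def)
    qed
    show "l *\<^sub>R R x - B (R x) = x" for x
    proof -
      obtain s1 s2 where s: "S (x, 0) = (s1, s2)" by fastforce
      then have "B s1 - l *\<^sub>R s1 = x" using S(3)[of "(x, 0)"] by (simp add: shift)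
      then show ?thesis using linear_neg[OF bounded_linear.linear[OF B]] by (simp add: R_def s)
    qed
  qed
  then show ?thesis using that by blast
qed

lemma cplx_funpow:
  assumes "linear B"
  shows "((\<lambda>v. cplx_scale w (cplx_map B v)) ^^ n) v = cplx_scale (w ^ n) (cplx_map (B ^^ n) v)"
proof (induction n)
  case 0
  then show ?case by (cases v) (simp add: cplx_map_def)
next
  case (Suc n)
  have map_Suc: "cplx_map B (cplx_map (B ^^ n) v) = cplx_map (B ^^ Suc n) v"
    by (cases v) (simp add: cplx_map_def)
  have "((\<lambda>v. cplx_scale w (cplx_map B v)) ^^ Suc n) v
      = cplx_scale w (cplx_scale (w ^ n) (cplx_map B (cplx_map (B ^^ n) v)))"
    using Suc by (simp add: cplx_scale_cplx_map[OF assms])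
  then show ?case by (simp add: map_Suc cplx_scale_mult o_def)
qed

lemma not_in_op_spectrum_if_neumann_inverse:
  fixes B :: "'a::real_normed_vector \<Rightarrow> 'a" and z :: complex
  defines "E \<equiv> \<lambda>v. cplx_scale (1/z) (cplx_map B v)"
  assumes z: "z \<noteq> 0" and S: "bounded_linear S" "\<And>v. S (v - E v) = v" "\<And>v. S v - E (S v) = v"
  shows "z \<notin> op_spectrum B"
proof -
  define S' where "S' w = S (cplx_scale (- 1/z) w)" for w
  have "bounded_linear S'" unfolding S'_def
    using bounded_linear_compose[OF S(1) bounded_linear_cplx_scale] by (simp add: o_def)
  moreover have "S' (cplx_shift B z v) = v" for v
  proof -
    have "cplx_scale (- 1/z) (cplx_shift B z v) = v - E v"
      using z by (simp add: cplx_shift_eq cplx_scale_diff cplx_scale_mult E_def cplx_scale_minus)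
    then show ?thesis using S(2) by (simp add: S'_def)
  qed
  moreover have "cplx_shift B z (S' w) = w" for w
  proof -
    define y where "y = S' w"
    have "cplx_map B y = cplx_scale z (E y)" using z by (simp add: E_def cplx_scale_mult)
    then have "cplx_shift B z y = cplx_scale z (- (y - E y))"
      by (simp add: cplx_shift_eq cplx_scale_diff cplx_scale_uminus)
    also have "y - E y = cplx_scale (- 1/z) w" using S(3) by (simp add: y_def S'_def)
    also have "cplx_scale z (- cplx_scale (- 1/z) w) = w"
      using z by (simp add: cplx_scale_mult cplx_scale_minus cplx_scale_uminus)
    finally show ?thesis by (simp add: y_def)
  qed
  ultimately show ?thesis unfolding not_in_op_spectrum_iff by blast
qed

lemma not_in_op_spectrum_if_power_bound:
  fixes B :: "'a::banach \<Rightarrow> 'a"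
  assumes B: "bounded_linear B" and C: "0 \<le> C" "\<And>x n. norm ((B ^^ n) x) \<le> C * m ^ n * norm x"
    and m: "0 < m" "m < cmod z"
  shows "z \<notin> op_spectrum B"
proof -
  define E where "E = (\<lambda>v. cplx_scale (1/z) (cplx_map B v))"
  have E: "bounded_linear E" unfolding E_def
    using bounded_linear_compose[OF bounded_linear_cplx_scale bounded_linear_cplx_map[OF B]]
    by (simp add: o_def)
  have "norm ((E ^^ n) v) \<le> (4 * C) * (m / cmod z) ^ n * norm v" for n v
  proof -
    have "norm ((E ^^ n) v) \<le> 2 * cmod ((1/z) ^ n) * norm (cplx_map (B ^^ n) v)"
      unfolding E_def cplx_funpow[OF bounded_linear.linear[OF B]] by (rule norm_cplx_scale_le)
    also have "\<dots> \<le> 2 * cmod ((1/z) ^ n) * (2 * (C * m ^ n) * norm v)"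
      using C m by (intro mult_left_mono norm_cplx_map_le) (auto simp: mult.assoc)
    also have "\<dots> = (4 * C) * (m / cmod z) ^ n * norm v"
      by (simp add: norm_power norm_divide power_divide)
    finally show ?thesis .
  qed
  moreover have "0 \<le> m / cmod z" "m / cmod z < 1" using m by (auto simp: divide_less_eq)
  ultimately have "bounded_linear (\<lambda>v. \<Sum>n. (E ^^ n) v)" "\<And>v. (\<Sum>n. (E ^^ n) (v - E v)) = v"
    "\<And>v. (\<Sum>n. (E ^^ n) v) - E (\<Sum>n. (E ^^ n) v) = v"
    using neumann_series[OF E] by blast+
  moreover have "z \<noteq> 0" using m by auto
  ultimately show ?thesis using not_in_op_spectrum_if_neumann_inverse unfolding E_def by blast
qed

section \<open>Interpolation inequalities\<close>

(* the sum of all products of n factors T or F with exactly k factors F, applied to x *)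
primrec mixed_power :: "('a::real_vector \<Rightarrow> 'a) \<Rightarrow> ('a \<Rightarrow> 'a) \<Rightarrow> nat \<Rightarrow> nat \<Rightarrow> 'a \<Rightarrow> 'a" where
  "mixed_power T F 0 k x = (if k = 0 then x else 0)"
| "mixed_power T F (Suc n) k x =
     T (mixed_power T F n k x) + (if k = 0 then 0 else F (mixed_power T F n (k - 1) x))"

lemma mixed_power_eq_0:
  assumes "linear T" "linear F" "n < k"
  shows "mixed_power T F n k x = 0"
  using assms(3)
proof (induction n arbitrary: k)
  case (Suc n)
  then show ?case using linear_0[OF assms(1)] linear_0[OF assms(2)] by simp
qed simp

lemma funpow_add_scaleR_eq_sum:
  assumes T: "linear T" and F: "linear F"
  shows "((\<lambda>x. T x + t *\<^sub>R F x) ^^ n) x = (\<Sum>k\<le>n. t ^ k *\<^sub>R mixed_power T F n k x)"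
proof (induction n)
  case (Suc n)
  define S where "S = (\<Sum>k\<le>n. t ^ k *\<^sub>R mixed_power T F n k x)"
  have "((\<lambda>x. T x + t *\<^sub>R F x) ^^ Suc n) x = T S + t *\<^sub>R F S" using Suc by (simp add: S_def)
  also have "T S = (\<Sum>k\<le>n. t ^ k *\<^sub>R T (mixed_power T F n k x))" unfolding S_def
    by (simp add: linear_sum[OF T] linear_scale[OF T])
  also have "t *\<^sub>R F S = (\<Sum>k\<le>n. t ^ Suc k *\<^sub>R F (mixed_power T F n k x))" unfolding S_def
    by (simp add: linear_sum[OF F] linear_scale[OF F] scaleR_sum_right)
  also have "(\<Sum>k\<le>n. t ^ k *\<^sub>R T (mixed_power T F n k x))
      = (\<Sum>k\<le>Suc n. t ^ k *\<^sub>R T (mixed_power T F n k x))"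
    using mixed_power_eq_0[OF T F, of n "Suc n" x] linear_0[OF T] by simp
  also have "(\<Sum>k\<le>n. t ^ Suc k *\<^sub>R F (mixed_power T F n k x))
      = (\<Sum>k\<le>Suc n. t ^ k *\<^sub>R (if k = 0 then 0 else F (mixed_power T F n (k - 1) x)))"
    by (subst sum.atMost_Suc_shift) simp
  finally show ?case by (simp add: scaleR_add_right sum.distrib)
qed simp

lemma power_powr_swap:
  fixes x :: real
  assumes "0 < x"
  shows "(x ^ n) powr a = (x powr a) ^ n"
proof -
  have "(x ^ n) powr a = (x powr real n) powr a" using powr_realpow[OF assms] by simp
  also have "\<dots> = (x powr a) ^ n" using assms by (simp add: powr_powr powr_power)
  finally show ?thesis .
qed

lemma geometric_interpolation_le:
  fixes t0 t1 l0 l1 \<theta> :: real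
  assumes pos: "0 < t0" "0 < t1" "0 < l0" "0 < l1" and \<theta>: "0 \<le> \<theta>" "\<theta> \<le> 1"
  shows "(t0 powr (1 - \<theta>) * t1 powr \<theta>) ^ k / (l0 powr (1 - \<theta>) * l1 powr \<theta>) ^ n
    \<le> (1 - \<theta>) * (t0 ^ k / l0 ^ n) + \<theta> * (t1 ^ k / l1 ^ n)"
proof -
  have "(t0 ^ k / l0 ^ n) powr (1 - \<theta>) * (t1 ^ k / l1 ^ n) powr \<theta>
      = (t0 powr (1 - \<theta>) * t1 powr \<theta>) ^ k / (l0 powr (1 - \<theta>) * l1 powr \<theta>) ^ n"
    using pos by (simp add: powr_divide power_powr_swap power_mult_distrib)
  moreover have "(t0 ^ k / l0 ^ n) powr (1 - \<theta>) * (t1 ^ k / l1 ^ n) powr \<theta>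
      \<le> (1 - \<theta>) * (t0 ^ k / l0 ^ n) + \<theta> * (t1 ^ k / l1 ^ n)"
    using pos \<theta> by (intro Youngs_inequality_0) auto
  ultimately show ?thesis by simp
qed

lemma interpolation_exponent_ex:
  fixes s t l :: real
  assumes s: "0 < s" "s < 1" and t: "0 < t" "t < 1" and l: "0 < l" "l < 1"
  obtains d L where "0 < d" "d < 1" "1 < L" "s < t powr d" "l powr d * L powr (1 - d) < 1"
proof -
  have logs: "ln s < 0" "ln t < 0" "ln l < 0" using s t l by simp_all
  define d where "d = min (1/2) (ln s / (2 * ln t))"
  have d: "0 < d" "d < 1" "d \<le> ln s / (2 * ln t)"
    using logs by (auto simp: d_def divide_neg_neg)
  define L where "L = exp (d * (- ln l) / (2 * (1 - d)))"
  have "0 < d * (- ln l) / (2 * (1 - d))" using d logs by (intro divide_pos_pos mult_pos_pos) auto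
  then have "1 < L" by (simp add: L_def)
  moreover have "s < t powr d"
  proof -
    have "ln s \<le> d * (2 * ln t)" using d(3) logs by (simp add: neg_le_divide_eq)
    then have "ln s < d * ln t" using logs by linarith
    then have "exp (ln s) < exp (d * ln t)" by simp
    then show ?thesis using s t by (simp add: powr_def)
  qed
  moreover have "l powr d * L powr (1 - d) < 1"
  proof -
    have "l powr d * L powr (1 - d) = exp (d * ln l) * exp ((1 - d) * ln L)"
      using l \<open>1 < L\<close> by (simp add: powr_def)
    also have "(1 - d) * ln L = - (d * ln l) / 2" using d(2) by (simp add: L_def field_simps)
    also have "exp (d * ln l) * exp (- (d * ln l) / 2) = exp (d * ln l / 2)" by (simp flip: exp_add)
    finally show ?thesis using d logs by (simp add: mult_pos_neg)
  qed
  ultimately show ?thesis using that d by blast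
qed

section \<open>Normal generating cones and Ando's theorem\<close>

lemma ball_subset_symmetric_convex:
  fixes S :: "'a::real_normed_vector set"
  assumes "convex S" and "\<And>x. x \<in> S \<Longrightarrow> - x \<in> S" and "ball q e \<subseteq> S"
  shows "ball 0 e \<subseteq> S"
proof
  fix y :: 'a assume "y \<in> ball 0 e"
  then have "q + y \<in> S" "q - y \<in> S" using assms(3) by (auto simp: dist_norm)
  then have "(1/2) *\<^sub>R (q + y) + (1/2) *\<^sub>R (- (q - y)) \<in> S"
    using assms(2)[of "q - y"] by (intro convexD[OF assms(1)]) auto
  moreover have "(1/2) *\<^sub>R (q + y) + (1/2) *\<^sub>R (- (q - y)) = y"
    by (simp add: algebra_simps) (metis scaleR_add_left scaleR_one field_sum_of_halves)
  ultimately show "y \<in> S" by simp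
qed

lemma successive_halving_sums:
  fixes D :: "'a::real_normed_vector \<Rightarrow> 'a"
  assumes approx: "\<And>y. norm y < r \<Longrightarrow> norm (y - D y) < r / 2" and x: "norm x < r"
  obtains ys where "\<And>k. norm (ys k) < r" "(\<lambda>k. (1/2::real) ^ k *\<^sub>R D (ys k)) sums x"
proof -
  define ys where "ys = rec_nat x (\<lambda>k y. 2 *\<^sub>R (y - D y))"
  have ys0: "ys 0 = x" and ysS: "ys (Suc k) = 2 *\<^sub>R (ys k - D (ys k))" for k
    by (simp_all add: ys_def)
  have bounded: "norm (ys k) < r" for k
  proof (induction k)
    case (Suc k)
    then show ?case using approx[of "ys k"] by (simp add: ysS)
  qed (use x ys0 in simp)
  have partial: "x = (\<Sum>k<N. (1/2::real) ^ k *\<^sub>R D (ys k)) + (1/2) ^ N *\<^sub>R ys N" for N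
  proof (induction N)
    case (Suc N)
    have "ys N = D (ys N) + (1/2::real) *\<^sub>R ys (Suc N)" by (simp add: ysS)
    then have "(1/2::real) ^ N *\<^sub>R ys N = (1/2) ^ N *\<^sub>R (D (ys N) + (1/2) *\<^sub>R ys (Suc N))"
      by simp
    also have "\<dots> = (1/2) ^ N *\<^sub>R D (ys N) + (1/2) ^ Suc N *\<^sub>R ys (Suc N)"
      by (simp add: scaleR_add_right)
    finally show ?case using Suc by (simp add: add.assoc)
  qed (simp add: ys0)
  have "(\<lambda>N. (1/2::real) ^ N *\<^sub>R ys N) \<longlonglongrightarrow> 0"
  proof (rule Lim_null_comparison[where g="\<lambda>N. r * (1/2::real) ^ N"])
    show "\<forall>\<^sub>F N in sequentially. norm ((1/2::real) ^ N *\<^sub>R ys N) \<le> r * (1/2) ^ N"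
      using bounded by (auto intro!: always_eventually simp: mult.commute less_imp_le)
    show "(\<lambda>N. r * (1/2::real) ^ N) \<longlonglongrightarrow> 0"
      by (intro tendsto_mult_right_zero LIMSEQ_power_zero) simp_all
  qed
  then have "(\<lambda>N. x - (1/2::real) ^ N *\<^sub>R ys N) \<longlonglongrightarrow> x - 0"
    by (intro tendsto_diff tendsto_const)
  moreover have "x - (1/2::real) ^ N *\<^sub>R ys N = (\<Sum>k<N. (1/2::real) ^ k *\<^sub>R D (ys k))" for N
    using partial[of N] by (simp add: algebra_simps)
  ultimately have "(\<lambda>k. (1/2::real) ^ k *\<^sub>R D (ys k)) sums x" unfolding sums_def by simp
  with bounded show ?thesis using that by blast
qed

locale normal_generating_cone =
  fixes K :: "'a::banach set"
  assumes cone: "is_cone K" and generating: "generating_cone K" and normal: "normal_cone K"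
begin

lemma closed_cone: "closed K"
  using cone by (simp add: is_cone_def)

lemma convex_cone: "convex K"
  using cone by (simp add: is_cone_def)

lemma cone_scaleR: "x \<in> K \<Longrightarrow> 0 \<le> c \<Longrightarrow> c *\<^sub>R x \<in> K"
  using cone by (simp add: is_cone_def)

lemma cone_decomposition:
  obtains u v where "u \<in> K" "v \<in> K" "x = u - v"
proof -
  have "x \<in> {u - v | u v. u \<in> K \<and> v \<in> K}" using generating by (simp add: generating_cone_def)
  then show ?thesis using that by blast
qed

lemma zero_in_cone: "0 \<in> K"
proof -
  obtain u v where "u \<in> K" using cone_decomposition by blast
  then show ?thesis using cone_scaleR[of u 0] by simp
qed

lemma cone_add: "x \<in> K \<Longrightarrow> y \<in> K \<Longrightarrow> x + y \<in> K"
proof -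
  assume "x \<in> K" "y \<in> K"
  then have "(1/2) *\<^sub>R x + (1/2) *\<^sub>R y \<in> K" using convex_cone by (intro convexD) auto
  then have "2 *\<^sub>R ((1/2) *\<^sub>R x + (1/2) *\<^sub>R y) \<in> K" by (rule cone_scaleR) simp
  then show ?thesis by (simp add: scaleR_add_right)
qed

lemma cone_sum: "finite S \<Longrightarrow> (\<And>i. i \<in> S \<Longrightarrow> f i \<in> K) \<Longrightarrow> sum f S \<in> K"
  by (induction S rule: finite_induct) (auto intro: cone_add zero_in_cone)

lemma cone_suminf: "summable f \<Longrightarrow> (\<And>n. f n \<in> K) \<Longrightarrow> suminf f \<in> K"
  using closed_cone closed_sequentially summable_LIMSEQ cone_sum by (metis finite_lessThan)

lemma normality:
  obtains \<gamma> where "\<gamma> > 0" "\<And>x y. x \<in> K \<Longrightarrow> y - x \<in> K \<Longrightarrow> norm x \<le> \<gamma> * norm y"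
  using normal unfolding normal_cone_def by blast

lemma geometric_cone_series:
  assumes U: "\<And>k. U k \<in> K" "\<And>k. norm (U k) \<le> 1"
  shows "summable (\<lambda>k. (1/2::real) ^ k *\<^sub>R U k)" and "(\<Sum>k. (1/2::real) ^ k *\<^sub>R U k) \<in> K"
    and "norm (\<Sum>k. (1/2::real) ^ k *\<^sub>R U k) \<le> 2"
proof -
  have geometric: "summable (\<lambda>k. (1/2::real) ^ k)" by (rule summable_geometric) simp
  have bound: "norm ((1/2::real) ^ k *\<^sub>R U k) \<le> (1/2) ^ k" for k
    using U(2)[of k] by (simp add: mult_le_one)
  show summable: "summable (\<lambda>k. (1/2::real) ^ k *\<^sub>R U k)"
    by (rule summable_comparison_test'[OF geometric]) (rule bound)
  show "(\<Sum>k. (1/2::real) ^ k *\<^sub>R U k) \<in> K"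
    by (rule cone_suminf[OF summable]) (simp add: U(1) cone_scaleR)
  have "norm (\<Sum>k. (1/2::real) ^ k *\<^sub>R U k) \<le> (\<Sum>k. (1/2::real) ^ k)"
    by (rule norm_suminf_le[OF bound geometric])
  also have "\<dots> = 2" using suminf_geometric[of "1/2::real"] by simp
  finally show "norm (\<Sum>k. (1/2::real) ^ k *\<^sub>R U k) \<le> 2" .
qed

definition unit_differences :: "'a set" where
  "unit_differences = {u - v | u v. u \<in> K \<and> v \<in> K \<and> norm u \<le> 1 \<and> norm v \<le> 1}"

lemma convex_unit_differences: "convex unit_differences"
proof (rule convexI)
  fix x y and a b :: real
  assume "x \<in> unit_differences" "y \<in> unit_differences" and ab: "0 \<le> a" "0 \<le> b" "a + b = 1"
  then obtain u1 v1 u2 v2 where uv: "u1 \<in> K" "v1 \<in> K" "norm u1 \<le> 1" "norm v1 \<le> 1" "x = u1 - v1"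
    "u2 \<in> K" "v2 \<in> K" "norm u2 \<le> 1" "norm v2 \<le> 1" "y = u2 - v2"
    unfolding unit_differences_def by blast
  have convex_ball: "norm (a *\<^sub>R p + b *\<^sub>R q) \<le> 1" if "norm p \<le> 1" "norm q \<le> 1" for p q :: 'a
  proof -
    have "norm (a *\<^sub>R p + b *\<^sub>R q) \<le> a * norm p + b * norm q"
      using norm_triangle_ineq[of "a *\<^sub>R p" "b *\<^sub>R q"] ab by simp
    also have "\<dots> \<le> a * 1 + b * 1" using that ab by (intro add_mono mult_left_mono) auto
    finally show ?thesis using ab by simp
  qed
  have "a *\<^sub>R x + b *\<^sub>R y = (a *\<^sub>R u1 + b *\<^sub>R u2) - (a *\<^sub>R v1 + b *\<^sub>R v2)"
    unfolding uv(5,10) by (simp add: algebra_simps)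
  moreover have "a *\<^sub>R u1 + b *\<^sub>R u2 \<in> K" "a *\<^sub>R v1 + b *\<^sub>R v2 \<in> K"
    using uv ab by (auto intro: cone_add cone_scaleR)
  ultimately show "a *\<^sub>R x + b *\<^sub>R y \<in> unit_differences"
    unfolding unit_differences_def using uv convex_ball by blast
qed

lemma uminus_unit_differences: "x \<in> unit_differences \<Longrightarrow> - x \<in> unit_differences"
  unfolding unit_differences_def by force

lemma unit_differences_cover: "\<exists>n. x \<in> (*\<^sub>R) (real (Suc n)) ` unit_differences"
proof -
  obtain u v where uv: "u \<in> K" "v \<in> K" "x = u - v" using cone_decomposition by blast
  obtain m where "norm u + norm v \<le> real m" using real_arch_simple by blast
  define c where "c = real (Suc m)"
  have c: "c > 0" "norm u \<le> c" "norm v \<le> c"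
    using \<open>norm u + norm v \<le> real m\<close> norm_ge_zero[of u] norm_ge_zero[of v] unfolding c_def by linarith+
  have "(1/c) *\<^sub>R u - (1/c) *\<^sub>R v \<in> unit_differences" unfolding unit_differences_def
    using c uv by (intro CollectI exI[of _ "(1/c) *\<^sub>R u"] exI[of _ "(1/c) *\<^sub>R v"])
      (auto intro!: cone_scaleR simp: field_simps)
  moreover have "x = c *\<^sub>R ((1/c) *\<^sub>R u - (1/c) *\<^sub>R v)" using c uv by (simp add: algebra_simps)
  ultimately show ?thesis unfolding c_def by blast
qed

lemma ball_subset_closure_unit_differences: "\<exists>r>0. ball 0 r \<subseteq> closure unit_differences"
proof -
  let ?D = "unit_differences"
  let ?G = "range (\<lambda>n::nat. closure ((*\<^sub>R) (real (Suc n)) ` ?D))"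
  have "\<exists>S\<in>?G. interior S \<noteq> {}"
  proof (rule ccontr)
    assume "\<not> ?thesis"
    then have "euclidean interior_of \<Union>?G = {}"
      by (intro Baire_category_alt) (auto simp: completely_metrizable_space_euclidean)
    moreover have "\<Union>?G = UNIV"
      using unit_differences_cover closure_subset by fastforce
    ultimately show False by simp
  qed
  then obtain n p e where pe: "e > 0" "ball p e \<subseteq> closure ((*\<^sub>R) (real (Suc n)) ` ?D)"
    by (metis (no_types, lifting) equals0I imageE mem_interior)
  define c where "c = real (Suc n)"
  have c: "c > 0" by (simp add: c_def)
  define q where "q = (1/c) *\<^sub>R p"
  have "ball q (e/c) \<subseteq> closure ?D"
  proof
    fix y assume "y \<in> ball q (e/c)"
    then have "dist q y < e / c" by simp
    have "p - c *\<^sub>R y = c *\<^sub>R (q - y)" using c by (simp add: q_def algebra_simps)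
    then have "dist p (c *\<^sub>R y) = c * dist q y" using c by (simp add: dist_norm)
    with \<open>dist q y < e / c\<close> c have "dist p (c *\<^sub>R y) < e" by (simp add: field_simps)
    then have "c *\<^sub>R y \<in> (*\<^sub>R) c ` closure ?D"
      using pe closure_scaleR[of c ?D] by (auto simp: c_def)
    then show "y \<in> closure ?D" using c by auto
  qed
  moreover have "- z \<in> closure ?D" if "z \<in> closure ?D" for z
  proof -
    have "closure ((*\<^sub>R) (-1) ` ?D) \<subseteq> closure ?D"
      using uminus_unit_differences by (intro closure_mono) auto
    moreover have "- z \<in> closure ((*\<^sub>R) (-1) ` ?D)" using that closure_scaleR[of "-1" ?D] by force
    ultimately show ?thesis by blast
  qed
  ultimately have "ball 0 (e/c) \<subseteq> closure ?D"
    using convex_closure[OF convex_unit_differences] by (intro ball_subset_symmetric_convex)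
  then show ?thesis using pe c by (intro exI[of _ "e/c"]) auto
qed

lemma small_cone_decomposition:
  obtains r where "r > 0"
    "\<And>x. norm x < r \<Longrightarrow> \<exists>u v. u \<in> K \<and> v \<in> K \<and> x = u - v \<and> norm u \<le> 2 \<and> norm v \<le> 2"
proof -
  obtain r where r: "r > 0" "ball 0 r \<subseteq> closure unit_differences"
    using ball_subset_closure_unit_differences by blast
  have "\<exists>u v. u \<in> K \<and> v \<in> K \<and> norm u \<le> 1 \<and> norm v \<le> 1 \<and> norm (y - (u - v)) < r / 2"
    if "norm y < r" for y
  proof -
    have "y \<in> closure unit_differences" using r that by auto
    then obtain d where "d \<in> unit_differences" "dist d y < r/2"
      using r closure_approachable[of y unit_differences] by (metis half_gt_zero)
    then show ?thesis unfolding unit_differences_def by (auto simp: dist_norm norm_minus_commute) blast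
  qed
  then obtain U V where UV: "\<And>y. norm y < r \<Longrightarrow> U y \<in> K \<and> V y \<in> K \<and> norm (U y) \<le> 1
      \<and> norm (V y) \<le> 1 \<and> norm (y - (U y - V y)) < r / 2"
    by metis
  have "\<exists>u v. u \<in> K \<and> v \<in> K \<and> x = u - v \<and> norm u \<le> 2 \<and> norm v \<le> 2" if x: "norm x < r" for x
  proof -
    obtain ys where ys: "\<And>k. norm (ys k) < r"
      and sums: "(\<lambda>k. (1/2::real) ^ k *\<^sub>R (U (ys k) - V (ys k))) sums x"
      using successive_halving_sums[of r "\<lambda>y. U y - V y", OF _ x] UV by blast
    note U = geometric_cone_series[of "\<lambda>k. U (ys k)"] and V = geometric_cone_series[of "\<lambda>k. V (ys k)"]
    have "(\<lambda>k. (1/2::real) ^ k *\<^sub>R U (ys k) - (1/2) ^ k *\<^sub>R V (ys k))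
        sums ((\<Sum>k. (1/2::real) ^ k *\<^sub>R U (ys k)) - (\<Sum>k. (1/2::real) ^ k *\<^sub>R V (ys k)))"
      using U(1) V(1) UV ys by (intro sums_diff summable_sums) auto
    then have "x = (\<Sum>k. (1/2::real) ^ k *\<^sub>R U (ys k)) - (\<Sum>k. (1/2::real) ^ k *\<^sub>R V (ys k))"
      using sums by (simp add: scaleR_diff_right sums_unique2)
    then show ?thesis using U(2,3) V(2,3) UV ys by blast
  qed
  then show ?thesis using r(1) that by blast
qed

lemma bounded_cone_decomposition:
  obtains M where "M > 0"
    "\<And>x. \<exists>u v. u \<in> K \<and> v \<in> K \<and> x = u - v \<and> norm u \<le> M * norm x \<and> norm v \<le> M * norm x"
proof -
  obtain r where r: "r > 0"
    "\<And>x. norm x < r \<Longrightarrow> \<exists>u v. u \<in> K \<and> v \<in> K \<and> x = u - v \<and> norm u \<le> 2 \<and> norm v \<le> 2"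
    using small_cone_decomposition by blast
  have "\<exists>u v. u \<in> K \<and> v \<in> K \<and> x = u - v \<and> norm u \<le> (4/r) * norm x \<and> norm v \<le> (4/r) * norm x"
    for x
  proof (cases "x = 0")
    case True
    then show ?thesis using zero_in_cone by auto
  next
    case False
    define c where "c = r / (2 * norm x)"
    have c: "c > 0" "norm (c *\<^sub>R x) < r" "1/c = (2/r) * norm x" using False r by (simp_all add: c_def)
    then obtain u v where uv: "u \<in> K" "v \<in> K" "c *\<^sub>R x = u - v" "norm u \<le> 2" "norm v \<le> 2"
      using r by blast
    have "x = (1/c) *\<^sub>R (c *\<^sub>R x)" using c(1) by simp
    then have "x = (1/c) *\<^sub>R u - (1/c) *\<^sub>R v" by (simp add: uv(3) scaleR_diff_right)
    moreover have "(1/c) *\<^sub>R u \<in> K" "(1/c) *\<^sub>R v \<in> K" using uv c(1) by (auto intro: cone_scaleR)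
    moreover have "norm ((1/c) *\<^sub>R u) \<le> (4/r) * norm x" "norm ((1/c) *\<^sub>R v) \<le> (4/r) * norm x"
      using uv c r by (auto simp: field_simps intro!: mult_left_mono[of _ 2, THEN order.trans])
    ultimately show ?thesis by blast
  qed
  then show ?thesis using r that[of "4/r"] by simp
qed

lemma nonzero_in_cone:
  assumes "\<exists>x::'a. x \<noteq> 0"
  obtains x where "x \<in> K" "x \<noteq> 0"
proof -
  obtain x :: 'a where "x \<noteq> 0" using assms by blast
  moreover obtain u v where "u \<in> K" "v \<in> K" "x = u - v" by (rule cone_decomposition)
  ultimately show ?thesis using that by (cases "u = 0") auto
qed

lemma suminf_funpow_in_cone:
  assumes "summable (\<lambda>n. (P ^^ n) y)" and "\<And>z. z \<in> K \<Longrightarrow> P z \<in> K" and "y \<in> K"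
  shows "(\<Sum>n. (P ^^ n) y) \<in> K"
proof (rule cone_suminf[OF assms(1)])
  show "(P ^^ n) y \<in> K" for n by (induction n) (simp_all add: assms(2,3))
qed

section \<open>The growth rate of a positive operator\<close>

definition positive_operator :: "('a \<Rightarrow> 'a) \<Rightarrow> bool" where
  "positive_operator B \<longleftrightarrow> bounded_linear B \<and> (\<forall>x\<in>K. B x \<in> K)"

definition growth_bounded :: "('a \<Rightarrow> 'a) \<Rightarrow> real \<Rightarrow> bool" where
  "growth_bounded B l \<longleftrightarrow> (\<exists>C\<ge>0. \<forall>x\<in>K. \<forall>n. norm ((B ^^ n) x) \<le> C * l ^ n * norm x)"

definition positive_resolvent :: "('a \<Rightarrow> 'a) \<Rightarrow> real \<Rightarrow> bool" where
  "positive_resolvent B l \<longleftrightarrow> (\<exists>R. real_resolvent B l R \<and> (\<forall>x\<in>K. R x \<in> K))"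

definition growth_rate :: "('a \<Rightarrow> 'a) \<Rightarrow> real" where
  "growth_rate B = Inf {m. m > 0 \<and> growth_bounded B m}"

lemma positive_operatorD:
  assumes "positive_operator B"
  shows "bounded_linear B" "linear B" "x \<in> K \<Longrightarrow> B x \<in> K"
  using assms bounded_linear.linear by (auto simp: positive_operator_def)

lemma positive_operator_funpow:
  assumes "positive_operator B"
  shows "linear (B ^^ n)" and "x \<in> K \<Longrightarrow> (B ^^ n) x \<in> K"
proof -
  show "linear (B ^^ n)"
    using bounded_linear_funpow[OF positive_operatorD(1)[OF assms]] bounded_linear.linear by blast
  show "x \<in> K \<Longrightarrow> (B ^^ n) x \<in> K" by (induction n) (simp_all add: positive_operatorD(3)[OF assms])
qed

lemma positive_operator_add:
  "positive_operator B \<Longrightarrow> positive_operator C \<Longrightarrow> positive_operator (\<lambda>x. B x + C x)"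
  by (auto simp: positive_operator_def intro: bounded_linear_add cone_add)

lemma positive_operator_scaleR:
  "positive_operator B \<Longrightarrow> 0 \<le> c \<Longrightarrow> positive_operator (\<lambda>x. c *\<^sub>R B x)"
  by (auto simp: positive_operator_def
      intro: cone_scaleR bounded_linear_compose[OF bounded_linear_scaleR_right, unfolded o_def])

lemma positive_operator_comp:
  "positive_operator B \<Longrightarrow> positive_operator C \<Longrightarrow> positive_operator (\<lambda>x. B (C x))"
  by (auto simp: positive_operator_def intro: bounded_linear_compose[unfolded o_def])

lemma positive_resolventE:
  assumes "positive_resolvent B l"
  obtains R where "bounded_linear R" "\<And>x. R (l *\<^sub>R x - B x) = x" "\<And>x. l *\<^sub>R R x - B (R x) = x"
    "\<And>x. x \<in> K \<Longrightarrow> R x \<in> K"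
  using assms by (auto simp: positive_resolvent_def real_resolvent_def)

lemma growth_bounded_everywhere:
  assumes B: "positive_operator B" and "growth_bounded B m" "m > 0"
  obtains C where "C \<ge> 0" "\<And>x n. norm ((B ^^ n) x) \<le> C * m ^ n * norm x"
proof -
  obtain C where C: "C \<ge> 0" "\<And>x n. x \<in> K \<Longrightarrow> norm ((B ^^ n) x) \<le> C * m ^ n * norm x"
    using assms(2) growth_bounded_def by auto
  obtain M where M: "M > 0"
    "\<And>x. \<exists>u v. u \<in> K \<and> v \<in> K \<and> x = u - v \<and> norm u \<le> M * norm x \<and> norm v \<le> M * norm x"
    using bounded_cone_decomposition by blast
  have "norm ((B ^^ n) x) \<le> (2 * M * C) * m ^ n * norm x" for x n
  proof -
    obtain u v where uv: "u \<in> K" "v \<in> K" "x = u - v" "norm u \<le> M * norm x" "norm v \<le> M * norm x"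
      using M(2) by blast
    have "(B ^^ n) x = (B ^^ n) u - (B ^^ n) v"
      using uv(3) linear_diff[OF positive_operator_funpow(1)[OF B]] by simp
    then have "norm ((B ^^ n) x) \<le> norm ((B ^^ n) u) + norm ((B ^^ n) v)"
      by (simp add: norm_triangle_ineq4)
    also have "\<dots> \<le> C * m ^ n * norm u + C * m ^ n * norm v" using C uv by (intro add_mono) auto
    also have "\<dots> \<le> C * m ^ n * (M * norm x) + C * m ^ n * (M * norm x)"
      using uv C assms(3) by (intro add_mono mult_left_mono) auto
    finally show ?thesis by (simp add: algebra_simps)
  qed
  then show ?thesis using that[of "2 * M * C"] M(1) C(1) by simp
qed

lemma growth_bounded_mono:
  assumes "growth_bounded B m" "0 \<le> m" "m \<le> l"
  shows "growth_bounded B l"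
proof -
  obtain C where C: "0 \<le> C" "\<forall>x\<in>K. \<forall>n. norm ((B ^^ n) x) \<le> C * m ^ n * norm x"
    using assms(1) growth_bounded_def by auto
  have "C * m ^ n * norm x \<le> C * l ^ n * norm x" for x n
    using C assms by (intro mult_right_mono mult_left_mono power_mono) auto
  then show ?thesis unfolding growth_bounded_def using C by (meson order.trans)
qed

lemma growth_bounded_ex: "positive_operator B \<Longrightarrow> \<exists>m>0. growth_bounded B m"
  using funpow_norm_bound positive_operatorD(1) unfolding growth_bounded_def
  by (metis mult_1 order.refl zero_le_one)

lemma positive_resolvent_if_growth_bounded:
  assumes B: "positive_operator B" and "growth_bounded B m" and m: "0 < m" "m < l"
  shows "positive_resolvent B l"
proof -
  obtain C where C: "\<And>x n. norm ((B ^^ n) x) \<le> C * m ^ n * norm x"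
    using growth_bounded_everywhere[OF B assms(2) m(1)] by metis
  note N = real_resolvent_neumann[OF positive_operatorD(1)[OF B] C m]
  have "(1/l) *\<^sub>R (\<Sum>n. ((\<lambda>x. (1/l) *\<^sub>R B x) ^^ n) x) \<in> K" if "x \<in> K" for x
    using N(2) that m positive_operatorD(3)[OF B]
    by (intro cone_scaleR suminf_funpow_in_cone) (auto intro: cone_scaleR)
  with N(1) show ?thesis unfolding positive_resolvent_def by blast
qed

lemma growth_bounded_if_positive_resolvent:
  assumes B: "positive_operator B" and "positive_resolvent B l" and l: "l > 0"
  shows "growth_bounded B l"
proof -
  obtain R where R: "real_resolvent B l R" "\<And>x. x \<in> K \<Longrightarrow> R x \<in> K"
    using assms(2) unfolding positive_resolvent_def by blast
  obtain \<gamma> where \<gamma>: "\<gamma> > 0" "\<And>x y. x \<in> K \<Longrightarrow> y - x \<in> K \<Longrightarrow> norm x \<le> \<gamma> * norm y"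
    using normality by blast
  obtain c where c: "c > 0" "\<And>x. norm (R x) \<le> norm x * c"
    using bounded_linear.pos_bounded[OF real_resolventD(1)[OF R(1)]] by blast
  have "norm ((B ^^ N) x) \<le> (\<gamma> * c * l) * l ^ N * norm x" if x: "x \<in> K" for x N
  proof -
    \<comment> \<open>R x dominates each term of its Neumann expansion; normality compares the norms\<close>
    have "R x - (1/l) ^ Suc N *\<^sub>R (B ^^ N) x
        = (\<Sum>n<N. (1/l) ^ Suc n *\<^sub>R (B ^^ n) x) + (1/l) ^ Suc N *\<^sub>R (B ^^ Suc N) (R x)"
      using resolvent_expansion[OF positive_operatorD(1)[OF B] real_resolventD(3)[OF R(1)], where N="Suc N"] l
      by (simp add: algebra_simps)
    also have "\<dots> \<in> K" using x l R(2) positive_operator_funpow(2)[OF B] positive_operatorD(3)[OF B]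
      by (intro cone_add cone_sum cone_scaleR) auto
    finally have "R x - (1/l) ^ Suc N *\<^sub>R (B ^^ N) x \<in> K" .
    moreover have "(1/l) ^ Suc N *\<^sub>R (B ^^ N) x \<in> K"
      using x l positive_operator_funpow(2)[OF B] by (intro cone_scaleR) auto
    ultimately have "norm ((1/l) ^ Suc N *\<^sub>R (B ^^ N) x) \<le> \<gamma> * norm (R x)"
      using \<gamma>(2) by blast
    also have "\<dots> \<le> \<gamma> * (norm x * c)" using c(2)[of x] \<gamma>(1) by (intro mult_left_mono) auto
    finally have "(1/l) ^ Suc N * norm ((B ^^ N) x) \<le> \<gamma> * (norm x * c)" using l by simp
    then have "norm ((B ^^ N) x) \<le> l ^ Suc N * (\<gamma> * (norm x * c))"
      using l by (simp add: field_simps power_divide)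
    then show ?thesis by (simp add: algebra_simps)
  qed
  then show ?thesis unfolding growth_bounded_def using \<gamma> c l by (intro exI[of _ "\<gamma> * c * l"]) auto
qed

lemma positive_resolvent_below:
  assumes B: "positive_operator B" and "positive_resolvent B l" and l: "l > 0"
  obtains l' where "0 < l'" "l' < l" "positive_resolvent B l'"
proof -
  obtain R where R: "real_resolvent B l R" "\<And>x. x \<in> K \<Longrightarrow> R x \<in> K"
    using assms(2) unfolding positive_resolvent_def by blast
  obtain c where c: "c > 0" "\<And>x. norm (R x) \<le> norm x * c"
    using bounded_linear.pos_bounded[OF real_resolventD(1)[OF R(1)]] by blast
  define d where "d = min (l/2) (1/(2*c))"
  have d: "d > 0" "d < l" "d * c \<le> 1/2" using l c by (auto simp: d_def min_def field_simps)
  have small: "norm (R (d *\<^sub>R x)) \<le> (d * c) * norm x" for x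
    using c(2)[of x] d linear_scale[OF bounded_linear.linear[OF real_resolventD(1)[OF R(1)]]]
    by (simp add: mult_left_mono algebra_simps)
  have "0 \<le> d * c" using d c by simp
  note P = real_resolvent_perturbation[OF positive_operatorD(2)[OF B] R(1) bounded_linear_scaleR_right
      this d(3) small]
  define R' where "R' = (\<lambda>x. \<Sum>n. ((\<lambda>y. R (d *\<^sub>R y)) ^^ n) (R x))"
  have "real_resolvent B (l - d) R'" using P(1) unfolding R'_def real_resolvent_shift .
  moreover have "R' x \<in> K" if "x \<in> K" for x
    unfolding R'_def using P(3) that d(1) by (intro suminf_funpow_in_cone) (auto intro!: R(2) cone_scaleR)
  ultimately have "positive_resolvent B (l - d)" unfolding positive_resolvent_def by blast
  then show ?thesis using that[of "l - d"] d by simp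
qed

lemma growth_rate_nonneg: "positive_operator B \<Longrightarrow> 0 \<le> growth_rate B"
  unfolding growth_rate_def using growth_bounded_ex by (intro cInf_greatest) auto

lemma growth_rate_le: "growth_bounded B m \<Longrightarrow> m > 0 \<Longrightarrow> growth_rate B \<le> m"
  unfolding growth_rate_def by (rule cInf_lower) (auto intro: bdd_belowI[of _ 0])

lemma growth_rate_less_ex:
  assumes "positive_operator B" "growth_rate B < l"
  obtains m where "0 < m" "m < l" "growth_bounded B m"
proof -
  have "{m. m > 0 \<and> growth_bounded B m} \<noteq> {}" using growth_bounded_ex[OF assms(1)] by blast
  from cInf_lessD[OF this assms(2)[unfolded growth_rate_def]] show ?thesis using that by blast
qed

lemma growth_rate_less_iff:
  assumes B: "positive_operator B" and l: "l > 0"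
  shows "growth_rate B < l \<longleftrightarrow> positive_resolvent B l"
proof
  assume "growth_rate B < l"
  then show "positive_resolvent B l"
    using growth_rate_less_ex[OF B] positive_resolvent_if_growth_bounded[OF B] by metis
next
  assume "positive_resolvent B l"
  then obtain l' where "0 < l'" "l' < l" "positive_resolvent B l'"
    using positive_resolvent_below[OF B _ l] by blast
  then show "growth_rate B < l"
    using growth_bounded_if_positive_resolvent[OF B] growth_rate_le by fastforce
qed

lemma growth_bounded_dominated:
  assumes B: "positive_operator B" and C: "positive_operator C"
    and le: "\<And>x. x \<in> K \<Longrightarrow> C x - B x \<in> K" and "growth_bounded C m"
  shows "growth_bounded B m"
proof -
  obtain \<gamma> where \<gamma>: "\<gamma> > 0" "\<And>x y. x \<in> K \<Longrightarrow> y - x \<in> K \<Longrightarrow> norm x \<le> \<gamma> * norm y"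
    using normality by blast
  obtain c where c: "c \<ge> 0" "\<And>x n. x \<in> K \<Longrightarrow> norm ((C ^^ n) x) \<le> c * m ^ n * norm x"
    using assms(4) unfolding growth_bounded_def by blast
  have dominated: "(C ^^ n) x - (B ^^ n) x \<in> K" if "x \<in> K" for x n
  proof (induction n)
    case (Suc n)
    have "(C ^^ Suc n) x - (B ^^ Suc n) x = C ((C ^^ n) x - (B ^^ n) x) + (C ((B ^^ n) x) - B ((B ^^ n) x))"
      using linear_diff[OF positive_operatorD(2)[OF C]] by simp
    also have "\<dots> \<in> K"
      using Suc le positive_operatorD(3)[OF C] positive_operator_funpow(2)[OF B that] by (intro cone_add) auto
    finally show ?case .
  qed (simp add: zero_in_cone)
  have "norm ((B ^^ n) x) \<le> (\<gamma> * c) * m ^ n * norm x" if "x \<in> K" for x n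
  proof -
    have "norm ((B ^^ n) x) \<le> \<gamma> * norm ((C ^^ n) x)"
      using \<gamma> dominated that positive_operator_funpow(2)[OF B] by blast
    also have "\<dots> \<le> \<gamma> * (c * m ^ n * norm x)" using c \<gamma> that by (intro mult_left_mono) auto
    finally show ?thesis by (simp add: algebra_simps)
  qed
  then show ?thesis unfolding growth_bounded_def using \<gamma> c by (intro exI[of _ "\<gamma> * c"]) auto
qed

lemma growth_rate_mono:
  assumes "positive_operator B" "positive_operator C" "\<And>x. x \<in> K \<Longrightarrow> C x - B x \<in> K"
  shows "growth_rate B \<le> growth_rate C"
  unfolding growth_rate_def
  using growth_bounded_ex[OF assms(2)] growth_bounded_dominated[OF assms]
  by (intro cInf_superset_mono bdd_belowI[of _ 0]) auto

lemma positive_resolvent_scaleR: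
  assumes "positive_resolvent B l" "c > 0" "linear B"
  shows "positive_resolvent (\<lambda>x. c *\<^sub>R B x) (c * l)"
proof -
  obtain R where R: "bounded_linear R" "\<And>x. R (l *\<^sub>R x - B x) = x" "\<And>x. l *\<^sub>R R x - B (R x) = x"
    "\<And>x. x \<in> K \<Longrightarrow> R x \<in> K"
    using assms(1) positive_resolventE by blast
  define R' where "R' = (\<lambda>x. (1/c) *\<^sub>R R x)"
  have "real_resolvent (\<lambda>x. c *\<^sub>R B x) (c * l) R'"
    unfolding real_resolvent_def
  proof (intro conjI allI)
    show "bounded_linear R'" unfolding R'_def
      using bounded_linear_compose[OF bounded_linear_scaleR_right R(1)] by (simp add: o_def)
    show "R' ((c * l) *\<^sub>R x - c *\<^sub>R B x) = x" for x
    proof -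
      have "(c * l) *\<^sub>R x - c *\<^sub>R B x = c *\<^sub>R (l *\<^sub>R x - B x)" by (simp add: algebra_simps)
      then show ?thesis
        using R(2)[of x] linear_scale[OF bounded_linear.linear[OF R(1)]] assms(2) by (simp add: R'_def)
    qed
    show "(c * l) *\<^sub>R R' x - c *\<^sub>R B (R' x) = x" for x
      using R(3)[of x] assms(2) linear_scale[OF assms(3)] by (simp add: R'_def)
  qed
  moreover have "R' x \<in> K" if "x \<in> K" for x using R(4) that assms(2) by (simp add: R'_def cone_scaleR)
  ultimately show ?thesis unfolding positive_resolvent_def by blast
qed

lemma growth_rate_scaleR:
  assumes B: "positive_operator B" and c: "c > 0"
  shows "growth_rate (\<lambda>x. c *\<^sub>R B x) = c * growth_rate B"
proof -
  let ?cB = "\<lambda>x. c *\<^sub>R B x"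
  have cB: "positive_operator ?cB" using positive_operator_scaleR[OF B] c by simp
  have less_iff: "growth_rate ?cB < c * l \<longleftrightarrow> growth_rate B < l" if l: "l > 0" for l
  proof -
    have "positive_resolvent ?cB (c * l) \<longleftrightarrow> positive_resolvent B l"
    proof
      assume "positive_resolvent ?cB (c * l)"
      from positive_resolvent_scaleR[OF this, of "1/c"] c positive_operatorD(2)[OF cB]
      show "positive_resolvent B l" by simp
    qed (rule positive_resolvent_scaleR[OF _ c positive_operatorD(2)[OF B]])
    then show ?thesis using growth_rate_less_iff[OF cB] growth_rate_less_iff[OF B] l c by simp
  qed
  have nonneg: "0 \<le> growth_rate ?cB" "0 \<le> growth_rate B"
    using growth_rate_nonneg cB B by blast+
  show ?thesis
  proof (rule antisym)
    show "growth_rate ?cB \<le> c * growth_rate B"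
    proof (rule ccontr)
      assume "\<not> growth_rate ?cB \<le> c * growth_rate B"
      then have "c * growth_rate B < growth_rate ?cB" by simp
      moreover have "0 \<le> c * growth_rate B" using c nonneg by simp
      ultimately have "growth_rate B < growth_rate ?cB / c" "0 < growth_rate ?cB / c"
        using c by (auto simp: field_simps)
      then show False using less_iff[of "growth_rate ?cB / c"] c by simp
    qed
    show "c * growth_rate B \<le> growth_rate ?cB"
    proof (rule ccontr)
      assume "\<not> c * growth_rate B \<le> growth_rate ?cB"
      then have lt: "growth_rate ?cB < c * growth_rate B" by simp
      then have "0 < c * growth_rate B" using nonneg by linarith
      with lt have "growth_rate ?cB < c * growth_rate B" "0 < growth_rate B"
        using c by (simp_all add: zero_less_mult_iff)
      then show False using less_iff[of "growth_rate B"] by simp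
    qed
  qed
qed

section \<open>The spectral radius of a positive operator\<close>

lemma norm_le_growth_rate_if_in_op_spectrum:
  assumes B: "positive_operator B" and z: "z \<in> op_spectrum B"
  shows "cmod z \<le> growth_rate B"
proof (rule ccontr)
  assume "\<not> cmod z \<le> growth_rate B"
  then have "growth_rate B < cmod z" by simp
  then obtain m where m: "0 < m" "m < cmod z" "growth_bounded B m"
    using growth_rate_less_ex[OF B] by blast
  obtain C where C: "C \<ge> 0" "\<And>x n. norm ((B ^^ n) x) \<le> C * m ^ n * norm x"
    using growth_bounded_everywhere[OF B m(3) m(1)] by blast
  have "z \<notin> op_spectrum B"
    by (rule not_in_op_spectrum_if_power_bound[OF positive_operatorD(1)[OF B] C m(1,2)])
  then show False using z by contradiction
qed

lemma real_resolvent_positive: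
  assumes B: "positive_operator B" and l: "growth_rate B \<le> l" and R: "real_resolvent B l R"
    and x: "x \<in> K"
  shows "R x \<in> K"
proof -
  obtain c where c: "c > 0" "\<And>y. norm (R y) \<le> norm y * c"
    using bounded_linear.pos_bounded[OF real_resolventD(1)[OF R]] by blast
  \<comment> \<open>Rd d is the resolvent at l + d, which is positive, and Rd d tends to R as d goes to 0+\<close>
  define Rd where "Rd d = (\<lambda>y. \<Sum>n. ((\<lambda>u. R ((- d) *\<^sub>R u)) ^^ n) (R y))" for d
  have near: "Rd d x \<in> K \<and> norm (Rd d x - R x) \<le> 2 * (d * c) * norm (R x)"
    if d: "0 < d" "d < 1 / (2 * c)" for d
  proof -
    have small: "norm (R ((- d) *\<^sub>R y)) \<le> (d * c) * norm y" for y
    proof -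
      have lin: "linear R" using real_resolventD(1)[OF R] bounded_linear.linear by blast
      have "norm (R ((- d) *\<^sub>R y)) = d * norm (R y)" using linear_scale[OF lin] linear_neg[OF lin] d by simp
      also have "\<dots> \<le> d * (norm y * c)" using c(2)[of y] d by (intro mult_left_mono) auto
      finally show ?thesis by (simp add: algebra_simps)
    qed
    have "0 \<le> d * c" "d * c \<le> 1/2" using d c by (auto simp: field_simps)
    note P = real_resolvent_perturbation[OF positive_operatorD(2)[OF B] R bounded_linear_scaleR_right
        this small]
    have "real_resolvent B (l + d) (Rd d)"
      using P(1) real_resolvent_shift[of B "- d" l] by (simp add: Rd_def)
    moreover obtain Rm where "real_resolvent B (l + d) Rm" "\<And>y. y \<in> K \<Longrightarrow> Rm y \<in> K"
      using growth_rate_less_iff[OF B, of "l + d"] l d growth_rate_nonneg[OF B]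
      unfolding positive_resolvent_def by auto
    ultimately have "Rd d x \<in> K" using real_resolvent_unique x by metis
    with P(2) show ?thesis by (simp add: Rd_def)
  qed
  have eventually_near:
    "eventually (\<lambda>d. Rd d x \<in> K \<and> norm (Rd d x - R x) \<le> 2 * (d * c) * norm (R x)) (at_right 0)"
    using eventually_at_right_real[of 0 "1 / (2 * c)"] c near by (auto elim: eventually_mono)
  have "((\<lambda>d. 2 * (d * c) * norm (R x)) \<longlongrightarrow> 2 * (0 * c) * norm (R x)) (at_right 0)"
    by (intro tendsto_intros)
  then have "((\<lambda>d. 2 * (d * c) * norm (R x)) \<longlongrightarrow> 0) (at_right 0)" by simp
  then have "((\<lambda>d. Rd d x - R x) \<longlongrightarrow> 0) (at_right 0)"
    by (rule Lim_null_comparison[rotated]) (use eventually_near in \<open>auto elim: eventually_mono\<close>)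
  then have lim: "((\<lambda>d. Rd d x) \<longlongrightarrow> R x) (at_right 0)" by (rule LIM_zero_cancel)
  have "eventually (\<lambda>d. Rd d x \<in> K) (at_right 0)"
    using eventually_near by (auto elim: eventually_mono)
  from Lim_in_closed_set[OF closed_cone this _ lim] show ?thesis by simp
qed

lemma growth_rate_pos_if_invertible:
  assumes B: "positive_operator B" and R: "real_resolvent B 0 R" and x0: "x0 \<in> K" "x0 \<noteq> 0"
  shows "growth_rate B > 0"
proof (rule ccontr)
  assume "\<not> growth_rate B > 0"
  obtain c where c: "c > 0" "\<And>y. norm (R y) \<le> norm y * c"
    using bounded_linear.pos_bounded[OF real_resolventD(1)[OF R]] by blast
  have "0 < 1 / c" using c by simp
  then have "growth_rate B < 1 / c" using \<open>\<not> growth_rate B > 0\<close> by linarith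
  then obtain m where m: "0 < m" "m < 1 / c" "growth_bounded B m"
    using growth_rate_less_ex[OF B] by blast
  obtain C where C: "\<And>n. norm ((B ^^ n) x0) \<le> C * m ^ n * norm x0"
    using m(3) x0(1) unfolding growth_bounded_def by blast
  have RB: "R (B y) = - y" for y
    using real_resolventD(2)[OF R, of y] linear_neg[OF bounded_linear.linear[OF real_resolventD(1)[OF R]]]
    by (metis minus_minus diff_0 scale_zero_left)
  have inverse_bound: "norm y \<le> c ^ n * norm ((B ^^ n) y)" for y n
  proof (induction n arbitrary: y)
    case (Suc n)
    have "norm y = norm (R (B y))" using RB by simp
    also have "\<dots> \<le> norm (B y) * c" by (rule c(2))
    also have "\<dots> \<le> c ^ n * norm ((B ^^ n) (B y)) * c" using Suc[of "B y"] c by (intro mult_right_mono) auto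
    also have "\<dots> = c ^ Suc n * norm ((B ^^ Suc n) y)" by (simp add: funpow_swap1 algebra_simps)
    finally show ?case .
  qed simp
  have "norm x0 \<le> C * (c * m) ^ n * norm x0" for n
  proof -
    have "norm x0 \<le> c ^ n * norm ((B ^^ n) x0)" by (rule inverse_bound)
    also have "\<dots> \<le> c ^ n * (C * m ^ n * norm x0)" using C[of n] c by (intro mult_left_mono) auto
    also have "\<dots> = C * (c * m) ^ n * norm x0" by (simp add: power_mult_distrib)
    finally show ?thesis .
  qed
  moreover have "(\<lambda>n. C * (c * m) ^ n * norm x0) \<longlonglongrightarrow> 0"
    using m c by (intro tendsto_mult_right_zero tendsto_mult_left_zero LIMSEQ_power_zero)
      (auto simp: field_simps)
  ultimately have "norm x0 \<le> 0" using LIMSEQ_le_const by blast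
  then show False using x0(2) by simp
qed

lemma growth_rate_in_op_spectrum:
  assumes B: "positive_operator B" and nontrivial: "\<exists>x::'a. x \<noteq> 0"
  shows "complex_of_real (growth_rate B) \<in> op_spectrum B"
proof (rule ccontr)
  assume "complex_of_real (growth_rate B) \<notin> op_spectrum B"
  then obtain R where R: "real_resolvent B (growth_rate B) R"
    using real_resolvent_if_not_in_op_spectrum[OF positive_operatorD(1)[OF B]] by blast
  show False
  proof (cases "growth_rate B > 0")
    case True
    have "positive_resolvent B (growth_rate B)"
      using R real_resolvent_positive[OF B order.refl R] unfolding positive_resolvent_def by blast
    then show False using growth_rate_less_iff[OF B True] by simp
  next
    case False
    then have "growth_rate B = 0" using growth_rate_nonneg[OF B] by simp
    moreover obtain x0 where "x0 \<in> K" "x0 \<noteq> 0" using nonzero_in_cone[OF nontrivial] by blast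
    ultimately show False using growth_rate_pos_if_invertible[OF B] R False by metis
  qed
qed

theorem spectral_radius_eq_growth_rate:
  assumes "positive_operator B" and "\<exists>x::'a. x \<noteq> 0"
  shows "spectral_radius B = growth_rate B"
  unfolding spectral_radius_def
proof (rule cSup_eq_maximum)
  show "growth_rate B \<in> cmod ` op_spectrum B"
    using growth_rate_in_op_spectrum[OF assms] growth_rate_nonneg[OF assms(1)]
    by (metis image_eqI norm_of_real abs_of_nonneg)
  show "r \<le> growth_rate B" if "r \<in> cmod ` op_spectrum B" for r
    using that norm_le_growth_rate_if_in_op_spectrum[OF assms(1)] by blast
qed

section \<open>Log-convexity of the growth rate\<close>

lemma positive_resolvent_small_perturbation:
  assumes T: "positive_operator T" and F: "positive_operator F" and "positive_resolvent T l"
  obtains t where "0 < t" "t < 1" "positive_resolvent (\<lambda>x. T x + t *\<^sub>R F x) l"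
proof -
  obtain R where R: "real_resolvent T l R" "\<And>x. x \<in> K \<Longrightarrow> R x \<in> K"
    using assms(3) unfolding positive_resolvent_def by blast
  obtain cR where cR: "cR > 0" "\<And>x. norm (R x) \<le> norm x * cR"
    using bounded_linear.pos_bounded[OF real_resolventD(1)[OF R(1)]] by blast
  obtain cF where cF: "cF > 0" "\<And>x. norm (F x) \<le> norm x * cF"
    using bounded_linear.pos_bounded[OF positive_operatorD(1)[OF F]] by blast
  define t where "t = 1 / (2 * (cR * cF + 1))"
  have p: "0 < cR * cF" using cR cF by simp
  then have t: "0 < t" "t < 1" "0 \<le> t * (cR * cF)" using p by (auto simp: t_def)
  have t_half: "t * (cR * cF) \<le> 1/2" using p by (simp add: t_def divide_le_eq)
  have small: "norm (R (t *\<^sub>R F y)) \<le> (t * (cR * cF)) * norm y" for y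
  proof -
    have "norm (R (t *\<^sub>R F y)) = t * norm (R (F y))"
      using linear_scale[OF bounded_linear.linear[OF real_resolventD(1)[OF R(1)]]] t by simp
    also have "\<dots> \<le> t * (norm (F y) * cR)" using cR(2) t by (intro mult_left_mono) auto
    also have "\<dots> \<le> t * ((norm y * cF) * cR)"
      using cF(2)[of y] t cR by (intro mult_left_mono mult_right_mono) auto
    finally show ?thesis by (simp add: algebra_simps)
  qed
  have E: "bounded_linear (\<lambda>x. t *\<^sub>R F x)"
    using positive_operatorD(1)[OF positive_operator_scaleR[OF F]] t by simp
  note P = real_resolvent_perturbation[OF positive_operatorD(2)[OF T] R(1) E t(3) t_half small]
  have "(\<Sum>n. ((\<lambda>y. R (t *\<^sub>R F y)) ^^ n) (R x)) \<in> K" if "x \<in> K" for x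
    using P(3) that t(1) positive_operatorD(3)[OF F]
    by (intro suminf_funpow_in_cone) (auto intro!: R(2) cone_scaleR)
  with P(1) have "positive_resolvent (\<lambda>x. T x + t *\<^sub>R F x) l"
    unfolding positive_resolvent_def by blast
  with t show ?thesis using that by blast
qed

lemma mixed_power_in_cone:
  "positive_operator T \<Longrightarrow> positive_operator F \<Longrightarrow> x \<in> K \<Longrightarrow> mixed_power T F n k x \<in> K"
  by (induction n arbitrary: k) (auto simp: positive_operator_def zero_in_cone intro!: cone_add)

lemma funpow_interpolation_in_cone:
  fixes n :: nat and t0 t1 l0 l1 \<theta> :: real
  assumes T: "positive_operator T" and F: "positive_operator F"
    and pos: "0 < t0" "0 < t1" "0 < l0" "0 < l1" and \<theta>: "0 \<le> \<theta>" "\<theta> \<le> 1" and x: "x \<in> K"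
  defines "P \<equiv> \<lambda>s. (\<lambda>x. T x + s *\<^sub>R F x) ^^ n"
    and "t \<equiv> t0 powr (1 - \<theta>) * t1 powr \<theta>" and "l \<equiv> l0 powr (1 - \<theta>) * l1 powr \<theta>"
  shows "(1 / l ^ n) *\<^sub>R P t x \<in> K"
    and "((1 - \<theta>) / l0 ^ n) *\<^sub>R P t0 x + (\<theta> / l1 ^ n) *\<^sub>R P t1 x - (1 / l ^ n) *\<^sub>R P t x \<in> K"
proof -
  have expand: "P s x = (\<Sum>k\<le>n. s ^ k *\<^sub>R mixed_power T F n k x)" for s
    unfolding P_def using positive_operatorD(2)[OF T] positive_operatorD(2)[OF F]
    by (rule funpow_add_scaleR_eq_sum)
  have "(1 / l ^ n) *\<^sub>R P t x = (\<Sum>k\<le>n. (t ^ k / l ^ n) *\<^sub>R mixed_power T F n k x)"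
    unfolding expand by (simp add: scaleR_sum_right)
  also have "\<dots> \<in> K" using x pos
    by (intro cone_sum cone_scaleR mixed_power_in_cone[OF T F]) (auto simp: t_def l_def)
  finally show "(1 / l ^ n) *\<^sub>R P t x \<in> K" .
  \<comment> \<open>coefficientwise, by geometric_interpolation_le\<close>
  have "((1 - \<theta>) / l0 ^ n) *\<^sub>R P t0 x + (\<theta> / l1 ^ n) *\<^sub>R P t1 x - (1 / l ^ n) *\<^sub>R P t x
      = (\<Sum>k\<le>n. ((1 - \<theta>) * (t0 ^ k / l0 ^ n) + \<theta> * (t1 ^ k / l1 ^ n) - t ^ k / l ^ n)
          *\<^sub>R mixed_power T F n k x)"
    unfolding expand
    by (simp add: scaleR_sum_right sum.distrib[symmetric] sum_subtractf[symmetric] scaleR_add_left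
        scaleR_diff_left)
  also have "\<dots> \<in> K" using x geometric_interpolation_le[OF pos \<theta>] unfolding t_def l_def
    by (intro cone_sum cone_scaleR mixed_power_in_cone[OF T F]) auto
  finally show "((1 - \<theta>) / l0 ^ n) *\<^sub>R P t0 x + (\<theta> / l1 ^ n) *\<^sub>R P t1 x - (1 / l ^ n) *\<^sub>R P t x \<in> K" .
qed

lemma growth_bounded_interpolation:
  assumes T: "positive_operator T" and F: "positive_operator F"
    and pos: "0 < t0" "0 < t1" "0 < l0" "0 < l1" and \<theta>: "0 \<le> \<theta>" "\<theta> \<le> 1"
    and bounded0: "growth_bounded (\<lambda>x. T x + t0 *\<^sub>R F x) l0"
    and bounded1: "growth_bounded (\<lambda>x. T x + t1 *\<^sub>R F x) l1"
  shows "growth_bounded (\<lambda>x. T x + (t0 powr (1 - \<theta>) * t1 powr \<theta>) *\<^sub>R F x) (l0 powr (1 - \<theta>) * l1 powr \<theta>)"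
proof -
  define t where "t = t0 powr (1 - \<theta>) * t1 powr \<theta>"
  define l where "l = l0 powr (1 - \<theta>) * l1 powr \<theta>"
  have l: "l > 0" using pos by (simp add: l_def)
  define P where "P s n = (\<lambda>x. T x + s *\<^sub>R F x) ^^ n" for s n
  obtain \<gamma> where \<gamma>: "\<gamma> > 0" "\<And>x y. x \<in> K \<Longrightarrow> y - x \<in> K \<Longrightarrow> norm x \<le> \<gamma> * norm y"
    using normality by blast
  obtain C0 where C0: "C0 \<ge> 0" "\<And>x n. x \<in> K \<Longrightarrow> norm (P t0 n x) \<le> C0 * l0 ^ n * norm x"
    using bounded0 unfolding growth_bounded_def P_def by blast
  obtain C1 where C1: "C1 \<ge> 0" "\<And>x n. x \<in> K \<Longrightarrow> norm (P t1 n x) \<le> C1 * l1 ^ n * norm x"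
    using bounded1 unfolding growth_bounded_def P_def by blast
  have bound: "norm (P t n x) \<le> (\<gamma> * ((1 - \<theta>) * C0 + \<theta> * C1)) * l ^ n * norm x" if x: "x \<in> K" for x n
  proof -
    have combination: "norm (((1 - \<theta>) / l0 ^ n) *\<^sub>R P t0 n x + (\<theta> / l1 ^ n) *\<^sub>R P t1 n x)
        \<le> (1 - \<theta>) / l0 ^ n * (C0 * l0 ^ n * norm x) + \<theta> / l1 ^ n * (C1 * l1 ^ n * norm x)"
    proof -
      have "norm (((1 - \<theta>) / l0 ^ n) *\<^sub>R P t0 n x + (\<theta> / l1 ^ n) *\<^sub>R P t1 n x)
          \<le> norm (((1 - \<theta>) / l0 ^ n) *\<^sub>R P t0 n x) + norm ((\<theta> / l1 ^ n) *\<^sub>R P t1 n x)"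
        by (rule norm_triangle_ineq)
      also have "\<dots> = (1 - \<theta>) / l0 ^ n * norm (P t0 n x) + \<theta> / l1 ^ n * norm (P t1 n x)"
        using \<theta> pos by simp
      also have "\<dots> \<le> (1 - \<theta>) / l0 ^ n * (C0 * l0 ^ n * norm x) + \<theta> / l1 ^ n * (C1 * l1 ^ n * norm x)"
        using \<theta> pos C0(2)[OF x] C1(2)[OF x] by (intro add_mono mult_left_mono) auto
      finally show ?thesis .
    qed
    have "norm ((1 / l ^ n) *\<^sub>R P t n x)
        \<le> \<gamma> * norm (((1 - \<theta>) / l0 ^ n) *\<^sub>R P t0 n x + (\<theta> / l1 ^ n) *\<^sub>R P t1 n x)"
      using \<gamma>(2) funpow_interpolation_in_cone[OF T F pos \<theta> x, where n=n]
      unfolding P_def t_def l_def by blast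
    also have "\<dots> \<le> \<gamma> * ((1 - \<theta>) / l0 ^ n * (C0 * l0 ^ n * norm x) + \<theta> / l1 ^ n * (C1 * l1 ^ n * norm x))"
      using combination \<gamma>(1) by (intro mult_left_mono) auto
    also have "\<dots> = \<gamma> * (((1 - \<theta>) * C0 + \<theta> * C1) * norm x)" using pos by (simp add: field_simps)
    finally show ?thesis using l by (simp add: field_simps)
  qed
  have "\<gamma> * ((1 - \<theta>) * C0 + \<theta> * C1) \<ge> 0" using \<gamma> C0 C1 \<theta> by simp
  with bound show ?thesis unfolding growth_bounded_def t_def[symmetric] l_def[symmetric] P_def by blast
qed

lemma growth_rate_scaled_less_one:
  assumes T: "positive_operator T" and F: "positive_operator F" and rT: "growth_rate T < 1"
    and rA: "growth_rate (\<lambda>x. T x + F x) \<le> 1" and s: "0 < s" "s < 1"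
  shows "growth_rate (\<lambda>x. T x + s *\<^sub>R F x) < 1"
proof -
  \<comment> \<open>log-convexity of t \<mapsto> r(T + t F): interpolate between a small t0 and t = 1\<close>
  have pos: "positive_operator (\<lambda>x. T x + t *\<^sub>R F x)" if "0 \<le> t" for t
    using positive_operator_add[OF T positive_operator_scaleR[OF F that]] .
  define l0 where "l0 = (growth_rate T + 1) / 2"
  have l0: "growth_rate T < l0" "0 < l0" "l0 < 1" using rT growth_rate_nonneg[OF T] by (auto simp: l0_def)
  obtain t0 where t0: "0 < t0" "t0 < 1" "positive_resolvent (\<lambda>x. T x + t0 *\<^sub>R F x) l0"
    using positive_resolvent_small_perturbation[OF T F] growth_rate_less_iff[OF T l0(2)] l0(1) by blast
  have bounded0: "growth_bounded (\<lambda>x. T x + t0 *\<^sub>R F x) l0"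
    using growth_bounded_if_positive_resolvent[OF pos t0(3) l0(2)] t0(1) by simp
  obtain d L where dL: "0 < d" "d < 1" "1 < L" "s < t0 powr d" "l0 powr d * L powr (1 - d) < 1"
    using interpolation_exponent_ex[OF s t0(1,2) l0(2,3)] by blast
  have "growth_rate (\<lambda>x. T x + F x) < L" using rA dL(3) by simp
  then obtain m where m: "0 < m" "m < L" "growth_bounded (\<lambda>x. T x + F x) m"
    using growth_rate_less_ex[OF positive_operator_add[OF T F]] by blast
  have bounded1: "growth_bounded (\<lambda>x. T x + 1 *\<^sub>R F x) L"
    using growth_bounded_mono[OF m(3)] m by simp
  have "growth_bounded (\<lambda>x. T x + (t0 powr (1 - (1 - d)) * 1 powr (1 - d)) *\<^sub>R F x)
      (l0 powr (1 - (1 - d)) * L powr (1 - d))"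
    using dL by (intro growth_bounded_interpolation[OF T F t0(1) _ l0(2) _ _ _ bounded0 bounded1]) auto
  then have "growth_bounded (\<lambda>x. T x + t0 powr d *\<^sub>R F x) (l0 powr d * L powr (1 - d))" by simp
  then have "growth_rate (\<lambda>x. T x + t0 powr d *\<^sub>R F x) \<le> l0 powr d * L powr (1 - d)"
    using l0(2) dL(3) by (intro growth_rate_le) auto
  moreover have "growth_rate (\<lambda>x. T x + s *\<^sub>R F x) \<le> growth_rate (\<lambda>x. T x + t0 powr d *\<^sub>R F x)"
  proof (rule growth_rate_mono[OF pos pos])
    show "(T x + t0 powr d *\<^sub>R F x) - (T x + s *\<^sub>R F x) \<in> K" if "x \<in> K" for x
      using cone_scaleR[OF positive_operatorD(3)[OF F that], of "t0 powr d - s"] dL(4)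
      by (simp add: algebra_simps)
  qed (use s in auto)
  ultimately show ?thesis using dL(5) by linarith
qed

section \<open>The next generation operator\<close>

lemma positive_resolvent_add_iff:
  assumes G: "positive_operator G" and R: "real_resolvent T l R" "\<And>x. x \<in> K \<Longrightarrow> R x \<in> K"
  shows "positive_resolvent (\<lambda>x. T x + G x) l \<longleftrightarrow> positive_resolvent (\<lambda>x. G (R x)) 1"
proof
  assume "positive_resolvent (\<lambda>x. T x + G x) l"
  then obtain S where S: "real_resolvent (\<lambda>x. T x + G x) l S" "\<And>x. x \<in> K \<Longrightarrow> S x \<in> K"
    unfolding positive_resolvent_def by blast
  have "real_resolvent (\<lambda>x. G (R x)) 1 (\<lambda>y. y + G (S y))"
    by (rule real_resolvent_next_generation[OF R(1) S(1) positive_operatorD(1)[OF G]])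
  moreover have "y + G (S y) \<in> K" if "y \<in> K" for y
    using that S(2) positive_operatorD(3)[OF G] by (auto intro: cone_add)
  ultimately show "positive_resolvent (\<lambda>x. G (R x)) 1"
    unfolding positive_resolvent_def by (intro exI[of _ "\<lambda>y. y + G (S y)"]) blast
next
  assume "positive_resolvent (\<lambda>x. G (R x)) 1"
  then obtain Q where Q: "real_resolvent (\<lambda>x. G (R x)) 1 Q" "\<And>x. x \<in> K \<Longrightarrow> Q x \<in> K"
    unfolding positive_resolvent_def by blast
  have "real_resolvent (\<lambda>x. T x + G x) l (\<lambda>y. R (Q y))"
    by (rule real_resolvent_from_next_generation[OF R(1) Q(1)])
  then show "positive_resolvent (\<lambda>x. T x + G x) l"
    unfolding positive_resolvent_def using Q(2) R(2) by (intro exI[of _ "\<lambda>y. R (Q y)"]) blast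
qed

lemma next_generation_resolvent_compare:
  assumes T: "positive_operator T" and F: "positive_operator F"
    and Rl: "real_resolvent T l Rl" "\<And>x. x \<in> K \<Longrightarrow> Rl x \<in> K"
    and R1: "real_resolvent T 1 R1" "\<And>x. x \<in> K \<Longrightarrow> R1 x \<in> K" and l: "l > 0" and x: "x \<in> K"
  shows "l \<le> 1 \<Longrightarrow> F (Rl x) - (1/l) *\<^sub>R F (R1 x) \<in> K"
    and "1 \<le> l \<Longrightarrow> (1/l) *\<^sub>R F (R1 x) - F (Rl x) \<in> K"
proof -
  have linF: "linear F" using positive_operatorD(2)[OF F] .
  have diff: "F (Rl x) - (1/l) *\<^sub>R F (R1 x) = ((1 - l) / l) *\<^sub>R F (T (Rl (R1 x)))"
    using arg_cong[OF resolvent_difference[OF positive_operatorD(2)[OF T] Rl(1) R1(1), of x], of F] l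
    by (simp add: linear_diff[OF linF] linear_scale[OF linF])
  have pos: "F (T (Rl (R1 x))) \<in> K" using T F Rl(2) R1(2) x by (simp add: positive_operatorD(3))
  show "l \<le> 1 \<Longrightarrow> F (Rl x) - (1/l) *\<^sub>R F (R1 x) \<in> K"
    unfolding diff using pos l by (intro cone_scaleR) auto
  have "(1/l) *\<^sub>R F (R1 x) - F (Rl x) = ((l - 1) / l) *\<^sub>R F (T (Rl (R1 x)))"
    using diff by (simp add: algebra_simps) (metis minus_diff_eq scaleR_minus_left minus_divide_left)
  then show "1 \<le> l \<Longrightarrow> (1/l) *\<^sub>R F (R1 x) - F (Rl x) \<in> K"
    using pos l by (auto intro: cone_scaleR)
qed

lemma growth_rate_sum_less_iff:
  assumes T: "positive_operator T" and F: "positive_operator F"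
    and R: "real_resolvent T l R" "\<And>x. x \<in> K \<Longrightarrow> R x \<in> K" and l: "l > 0"
  shows "growth_rate (\<lambda>x. T x + F x) < l \<longleftrightarrow> growth_rate (\<lambda>x. F (R x)) < 1"
proof -
  have "positive_operator R" using R unfolding positive_operator_def real_resolvent_def by blast
  then have "positive_operator (\<lambda>x. F (R x))" by (rule positive_operator_comp[OF F])
  then show ?thesis
    using positive_resolvent_add_iff[OF F R] growth_rate_less_iff[OF positive_operator_add[OF T F] l]
      growth_rate_less_iff[of "\<lambda>x. F (R x)" 1] by simp
qed

context
  fixes T F R1 :: "'a \<Rightarrow> 'a"
  assumes T: "positive_operator T" and F: "positive_operator F"
    and R1: "real_resolvent T 1 R1" and R1_pos: "\<And>x. x \<in> K \<Longrightarrow> R1 x \<in> K"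
begin

lemma growth_rate_base_less_1: "growth_rate T < 1"
  using growth_rate_less_iff[OF T, of 1] R1 R1_pos unfolding positive_resolvent_def by auto

lemma positive_next_generation: "positive_operator (\<lambda>x. F (R1 x))"
proof (rule positive_operator_comp[OF F])
  show "positive_operator R1" using R1 R1_pos by (simp add: positive_operator_def real_resolvent_def)
qed

lemma positive_resolvent_above_growth_rate:
  assumes "growth_rate T < l"
  obtains R where "real_resolvent T l R" "\<And>x. x \<in> K \<Longrightarrow> R x \<in> K" "positive_operator (\<lambda>x. F (R x))"
proof -
  have "0 < l" using assms growth_rate_nonneg[OF T] by linarith
  then obtain R where "real_resolvent T l R" "\<And>x. x \<in> K \<Longrightarrow> R x \<in> K"
    using growth_rate_less_iff[OF T] assms unfolding positive_resolvent_def by blast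
  moreover have "positive_operator R" using calculation unfolding positive_operator_def real_resolvent_def by blast
  ultimately show ?thesis using that positive_operator_comp[OF F] by blast
qed

lemma growth_rate_next_generation_le:
  assumes A: "growth_rate (\<lambda>x. T x + F x) < 1"
  shows "growth_rate (\<lambda>x. F (R1 x)) \<le> growth_rate (\<lambda>x. T x + F x)"
proof (rule dense_ge_bounded[OF A])
  fix l assume l: "growth_rate (\<lambda>x. T x + F x) < l" "l < 1"
  have A_pos: "positive_operator (\<lambda>x. T x + F x)" by (rule positive_operator_add[OF T F])
  have l0: "0 < l" using l growth_rate_nonneg[OF A_pos] by linarith
  have "growth_rate T \<le> growth_rate (\<lambda>x. T x + F x)"
    by (rule growth_rate_mono[OF T A_pos]) (simp add: positive_operatorD(3)[OF F])
  then have lT: "growth_rate T < l" using l by linarith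
  obtain Rl where Rl: "real_resolvent T l Rl" "\<And>x. x \<in> K \<Longrightarrow> Rl x \<in> K"
    and FRl: "positive_operator (\<lambda>x. F (Rl x))"
    using positive_resolvent_above_growth_rate[OF lT] by blast
  have "growth_rate (\<lambda>x. (1/l) *\<^sub>R F (R1 x)) \<le> growth_rate (\<lambda>x. F (Rl x))"
    using next_generation_resolvent_compare(1)[OF T F Rl R1 R1_pos l0] l l0
    by (intro growth_rate_mono[OF positive_operator_scaleR[OF positive_next_generation] FRl]) auto
  also have "\<dots> < 1" using growth_rate_sum_less_iff[OF T F Rl l0] l by simp
  finally show "growth_rate (\<lambda>x. F (R1 x)) \<le> l"
    using growth_rate_scaleR[OF positive_next_generation, of "1/l"] l0 by (simp add: field_simps)
qed

lemma growth_rate_next_generation_ge: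
  assumes A: "1 < growth_rate (\<lambda>x. T x + F x)"
  shows "growth_rate (\<lambda>x. T x + F x) \<le> growth_rate (\<lambda>x. F (R1 x))"
proof (rule dense_le_bounded[OF A])
  fix l assume l: "1 < l" "l < growth_rate (\<lambda>x. T x + F x)"
  have l0: "0 < l" using l by simp
  have lT: "growth_rate T < l" using growth_rate_base_less_1 l by linarith
  obtain Rl where Rl: "real_resolvent T l Rl" "\<And>x. x \<in> K \<Longrightarrow> Rl x \<in> K"
    and FRl: "positive_operator (\<lambda>x. F (Rl x))"
    using positive_resolvent_above_growth_rate[OF lT] by blast
  show "l \<le> growth_rate (\<lambda>x. F (R1 x))"
  proof (rule ccontr)
    assume "\<not> l \<le> growth_rate (\<lambda>x. F (R1 x))"
    then have "(1/l) * growth_rate (\<lambda>x. F (R1 x)) < 1" using l0 by (simp add: field_simps)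
    then have "growth_rate (\<lambda>x. (1/l) *\<^sub>R F (R1 x)) < 1"
      using growth_rate_scaleR[OF positive_next_generation, of "1/l"] l0 by simp
    moreover have "growth_rate (\<lambda>x. F (Rl x)) \<le> growth_rate (\<lambda>x. (1/l) *\<^sub>R F (R1 x))"
      using next_generation_resolvent_compare(2)[OF T F Rl R1 R1_pos l0] l l0
      by (intro growth_rate_mono[OF FRl positive_operator_scaleR[OF positive_next_generation]]) auto
    ultimately have "growth_rate (\<lambda>x. T x + F x) < l"
      using growth_rate_sum_less_iff[OF T F Rl l0] by simp
    then show False using l by simp
  qed
qed

lemma growth_rate_next_generation_eq_1:
  assumes A: "growth_rate (\<lambda>x. T x + F x) = 1"
  shows "growth_rate (\<lambda>x. F (R1 x)) = 1"
proof (rule antisym)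
  show "growth_rate (\<lambda>x. F (R1 x)) \<le> 1"
  proof (rule dense_ge)
    fix w :: real assume w: "1 < w"
    define s where "s = 1 / w"
    have s: "0 < s" "s < 1" using w by (auto simp: s_def)
    have "growth_rate (\<lambda>x. T x + s *\<^sub>R F x) < 1"
      using growth_rate_scaled_less_one[OF T F growth_rate_base_less_1] A s by simp
    then have "growth_rate (\<lambda>x. s *\<^sub>R F (R1 x)) < 1"
      using growth_rate_sum_less_iff[OF T positive_operator_scaleR[OF F] R1 R1_pos] s by simp
    then have "s * growth_rate (\<lambda>x. F (R1 x)) < 1"
      using growth_rate_scaleR[OF positive_next_generation s(1)] by simp
    then show "growth_rate (\<lambda>x. F (R1 x)) \<le> w" using w by (simp add: s_def field_simps)
  qed
  show "1 \<le> growth_rate (\<lambda>x. F (R1 x))"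
    using growth_rate_sum_less_iff[OF T F R1 R1_pos] A by simp
qed

end

end

theorem theorem3p2:
  fixes K :: "'a::banach set" and A T F :: "'a \<Rightarrow> 'a"
  assumes "is_cone K" and "generating_cone K" and "normal_cone K"
    and "bounded_linear A" and "A ` K \<subseteq> K"
    and "bounded_linear T" and "bounded_linear F"
    and "T ` K \<subseteq> K" and "F ` K \<subseteq> K"
    and "\<And>x. A x = T x + F x"
    and "spectral_radius T < 1"
  shows "let R0 = spectral_radius (F \<circ> inv (\<lambda>x. x - T x)); rA = spectral_radius A in
    (R0 \<ge> rA \<and> rA > 1 \<and> \<not> (R0 = 1 \<and> rA = 1) \<and> \<not> (R0 \<le> rA \<and> rA < 1)) \<or>
    (\<not> (R0 \<ge> rA \<and> rA > 1) \<and> (R0 = 1 \<and> rA = 1) \<and> \<not> (R0 \<le> rA \<and> rA < 1)) \<or>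
    (\<not> (R0 \<ge> rA \<and> rA > 1) \<and> \<not> (R0 = 1 \<and> rA = 1) \<and> (R0 \<le> rA \<and> rA < 1))"
proof (cases "\<exists>x::'a. x \<noteq> 0")
  case True
  interpret normal_generating_cone K using assms(1-3) by unfold_locales
  have pos: "positive_operator A" "positive_operator T" "positive_operator F"
    using assms(4-9) by (auto simp: positive_operator_def)
  have "growth_rate T < 1" using assms(11) spectral_radius_eq_growth_rate[OF pos(2) True] by simp
  then obtain R1 where R1: "real_resolvent T 1 R1" "\<And>x. x \<in> K \<Longrightarrow> R1 x \<in> K"
    using growth_rate_less_iff[OF pos(2)] unfolding positive_resolvent_def by auto
  have "F \<circ> inv (\<lambda>x. x - T x) = (\<lambda>x. F (R1 x))" by (auto simp: inv_eq_real_resolvent_one[OF R1(1)])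
  then have R0: "spectral_radius (F \<circ> inv (\<lambda>x. x - T x)) = growth_rate (\<lambda>x. F (R1 x))"
    using spectral_radius_eq_growth_rate[OF positive_next_generation[OF pos(2,3) R1] True] by simp
  have "A = (\<lambda>x. T x + F x)" using assms(10) by auto
  then have rA: "spectral_radius A = growth_rate (\<lambda>x. T x + F x)"
    using spectral_radius_eq_growth_rate[OF pos(1) True] by simp
  show ?thesis
    unfolding Let_def R0 rA
    using growth_rate_next_generation_le[OF pos(2,3) R1] growth_rate_next_generation_ge[OF pos(2,3) R1]
      growth_rate_next_generation_eq_1[OF pos(2,3) R1]
    by (cases rule: linorder_cases[of "growth_rate (\<lambda>x. T x + F x)" 1]) auto
next
  case False
  then have "op_spectrum (F \<circ> inv (\<lambda>x. x - T x)) = op_spectrum A"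
    using op_spectrum_trivial by auto
  then show ?thesis
    unfolding Let_def spectral_radius_def
    by (cases rule: linorder_cases[of "Sup (cmod ` op_spectrum A)" 1]) auto
qed

end
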